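(* Let $U$ be as in the context and let $\mathcal{A}$ be the set of critical points of $U$ in $\mathbb{S}^1$. Every weak KAM solution $w$ of negative type of $w'(x)(w'(x)-U'(x))=0$ on $\mathbb{S}^1$ is an invariant solution of the Lax–Oleinik semigroup, i.e. $S_tw=w$ for all $t\ge0$, and satisfies $$w(y)=\inf_{x\in\mathbb{S}^1}\big(w(x)+v(y;x)\big)=\inf_{z\in\mathcal{A}}\big(w(z)+h(y;z)\big),\qquad y\in\mathbb{S}^1.$$ In particular, the function $W(x)=\min_{j=1,\dots,k}\{W_j+h(x;x_j)\}$ with $W_i:=\min_{j=1,\dots,k}(\tilde h_R(x_i;x_{j+1})+\tilde h_L(x_i;x_j))$ is an invariant solution of $S_t$.
   Context: $\mathbb{S}^1=\mathbb{R}/\mathbb{Z}$; $U:\mathbb{R}\to\mathbb{R}$ smooth, skew periodic ($U(x)=\tilde U(x)-\bar bx$, $\tilde U$ smooth 1-periodic), whose critical points in one period are exactly $k\ge1$ local minima $x_1,\dots,x_k$ interleaved with $k$ local maxima, $0=x_{1/2}<x_1<x_{3/2}<\dots<x_k<x_{k+1/2}=1$, $x_{i+\ell k}=x_i+\ell$. $L(s,x)=\frac14(s+U'(x))^2$. Lax–Oleinik semigroup: $(S_tu)(y)=\inf_{x\in\mathbb{S}^1}\big(u(x)+\inf\{\int_0^tL(\dot\gamma,\gamma)d\tau:\gamma(0)=x,\gamma(t)=y\}\big)$. Mañé potential: $v(y;x)=\inf\{\int_0^TL(\dot\gamma,\gamma)dt:T\ge0,\gamma:[0,T]\to\mathbb{S}^1$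 absolutely continuous, $\gamma(0)=x,\gamma(T)=y\}$. Peierls barrier: $h(y;z)=\liminf_{T\to\infty}\inf\{\int_0^TL(\dot\gamma,\gamma)dt:\gamma(0)=z,\gamma(T)=y\}$. Right barrier: for $y\in[x_i,x_{i+k}]$, $h_R(y;x_i)=\inf\{\int_0^TL(\dot\gamma,\gamma)dt:T\ge0,\gamma:[0,T]\to\mathbb{R}$ absolutely continuous, $\gamma(0)=x_i,\gamma(T)=y\}$; left barrier $h_L(y;x_i)$, $y\in[x_{i-k},x_i]$, same formula; $\tilde h_R(x_i;x_{j+1})=h_R(x_i;x_{j+1})$ if $j<i$, $=h_R(x_{i+k};x_{j+1})$ if $j\ge i$; $\tilde h_L(x_i;x_j)=h_L(x_i;x_j)$ if $j\ge i$, $=h_L(x_{i-k};x_j)$ if $j<i$ ($x_{k+1}=x_1+1$). Weak KAM solution of negative type: continuous $u$ with (I) $u(\gamma(b))-u(\gamma(a))\le\int_a^bL(\dot\gamma,\gamma)dt$ for all absolutely continuous $\gamma:[a,b]\to\mathbb{S}^1$, and (II) for each $x$ a continuous piecewise $C^1$ $\gamma:(-\infty,0]\to\mathbb{S}^1$, $\gamma(0)=x$, with equality in (I) for all $a<b\le0$. *)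

theory Defs
  imports "HOL-Analysis.Analysis"
begin

definition smooth_fun :: "(real \<Rightarrow> real) \<Rightarrow> bool" where
  "smooth_fun f \<longleftrightarrow> (\<forall>n x. ((deriv ^^ n) f) differentiable (at x))"

definition skew_periodic :: "(real \<Rightarrow> real) \<Rightarrow> bool" where
  "skew_periodic U \<longleftrightarrow> (\<exists>Ut b. smooth_fun Ut \<and> (\<forall>x. Ut (x + 1) = Ut x) \<and>
                                  (\<forall>x. U x = Ut x - b * x))"

definition local_min_at :: "(real \<Rightarrow> real) \<Rightarrow> real \<Rightarrow> bool" where
  "local_min_at f t \<longleftrightarrow> (\<exists>e>0. \<forall>y. \<bar>y - t\<bar> < e \<longrightarrow> f t \<le> f y)"

definition local_max_at :: "(real \<Rightarrow> real) \<Rightarrow> real \<Rightarrow> bool" where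
  "local_max_at f t \<longleftrightarrow> (\<exists>e>0. \<forall>y. \<bar>y - t\<bar> < e \<longrightarrow> f y \<le> f t)"

(* q i stands for the paper's x_{i/2}, i = 1..2k+1.  So q 1 = x_{1/2} = 0,
   q (2k+1) = x_{k+1/2} = 1, local minima x_j = q (2j), local maxima at odd indices,
   and these are exactly the critical points of U in one period [0,1). *)
definition crit_config :: "(real \<Rightarrow> real) \<Rightarrow> nat \<Rightarrow> (nat \<Rightarrow> real) \<Rightarrow> bool" where
  "crit_config U k q \<longleftrightarrow>
     k \<ge> 1 \<and> q 1 = 0 \<and> q (2*k+1) = 1 \<and>
     (\<forall>i. 1 \<le> i \<and> i \<le> 2*k \<longrightarrow> q i < q (Suc i)) \<and>
     (\<forall>j. 1 \<le> j \<and> j \<le> k \<longrightarrow> local_min_at U (q (2*j))) \<and>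
     (\<forall>j. j \<le> k \<longrightarrow> local_max_at U (q (2*j+1))) \<and>
     {t \<in> {0..<1}. deriv U t = 0} = q ` {1..2*k}"

(* the local minima x_j, j = 1..k; extended by x_{j+k} = x_j + 1 as needed below *)
definition xmin :: "(nat \<Rightarrow> real) \<Rightarrow> nat \<Rightarrow> real" where
  "xmin q j = q (2*j)"

(* critical set A of U in S^1 (represented by [0,1)) *)
definition crit_set :: "(real \<Rightarrow> real) \<Rightarrow> real set" where
  "crit_set U = {t \<in> {0..<1}. deriv U t = 0}"

definition Lag :: "(real \<Rightarrow> real) \<Rightarrow> real \<Rightarrow> real \<Rightarrow> real" where
  "Lag U s x = (s + deriv U x)^2 / 4"

definition abs_cont_on :: "(real \<Rightarrow> real) \<Rightarrow> real \<Rightarrow> real \<Rightarrow> bool" where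
  "abs_cont_on f s t \<longleftrightarrow>
     (\<forall>\<epsilon>>0. \<exists>\<delta>>0. \<forall>(n::nat) a b.
        (\<forall>i<n. s \<le> a i \<and> a i \<le> b i \<and> b i \<le> t) \<and>
        (\<forall>i. Suc i < n \<longrightarrow> b i \<le> a (Suc i)) \<and>
        (\<Sum>i<n. b i - a i) < \<delta> \<longrightarrow>
        (\<Sum>i<n. \<bar>f (b i) - f (a i)\<bar>) < \<epsilon>)"

definition action :: "(real \<Rightarrow> real) \<Rightarrow> (real \<Rightarrow> real) \<Rightarrow> real \<Rightarrow> real \<Rightarrow> ereal" where
  "action U \<gamma> a b =
     (let I = (\<integral>\<^sup>+ t. ennreal (Lag U (vector_derivative \<gamma> (at t)) (\<gamma> t))
                                       * indicator {a..b} t \<partial>lborel)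
                          in if I = \<infinity> then \<infinity> else ereal (enn2real I))"

(* congruence mod 1: equality of the projections to S^1 = R/Z *)
definition cong1 :: "real \<Rightarrow> real \<Rightarrow> bool" where
  "cong1 a b \<longleftrightarrow> a - b \<in> \<int>"

definition minact :: "(real \<Rightarrow> real) \<Rightarrow> real \<Rightarrow> real \<Rightarrow> real \<Rightarrow> ereal" where
  "minact U t x y = (INF \<gamma> \<in> {\<gamma>. abs_cont_on \<gamma> 0 t \<and> \<gamma> 0 = x \<and> cong1 (\<gamma> t) y}. action U \<gamma> 0 t)"

(* Lax-Oleinik semigroup (functions on S^1 = 1-periodic functions on R) *)
definition LO :: "(real \<Rightarrow> real) \<Rightarrow> real \<Rightarrow> (real \<Rightarrow> ereal) \<Rightarrow> real \<Rightarrow> ereal" where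
  "LO U t u y = (INF x \<in> {0..<1}. u x + minact U t x y)"

definition mane :: "(real \<Rightarrow> real) \<Rightarrow> real \<Rightarrow> real \<Rightarrow> ereal" where
  "mane U y x = (INF p \<in> {(T, \<gamma>). T \<ge> 0 \<and> abs_cont_on \<gamma> 0 T \<and> \<gamma> 0 = x \<and> cong1 (\<gamma> T) y}.
                    action U (snd p) 0 (fst p))"

definition peierls :: "(real \<Rightarrow> real) \<Rightarrow> real \<Rightarrow> real \<Rightarrow> ereal" where
  "peierls U y z = Liminf at_top (\<lambda>T. minact U T z y)"

(* potential on the real line (no identification mod 1); h_R and h_L are this
   function restricted to y \<in> [x_i, x_{i+k}] resp. y \<in> [x_{i-k}, x_i] *)
definition maneR :: "(real \<Rightarrow> real) \<Rightarrow> real \<Rightarrow> real \<Rightarrow> ereal" where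
  "maneR U y x = (INF p \<in> {(T, \<gamma>). T \<ge> 0 \<and> abs_cont_on \<gamma> 0 T \<and> \<gamma> 0 = x \<and> \<gamma> T = y}.
                    action U (snd p) 0 (fst p))"

(* tilde h_R(x_i; x_{j+1}),  with x_{k+1} = x_1 + 1, x_{i+k} = x_i + 1 *)
definition hRt :: "(real \<Rightarrow> real) \<Rightarrow> nat \<Rightarrow> (nat \<Rightarrow> real) \<Rightarrow> nat \<Rightarrow> nat \<Rightarrow> ereal" where
  "hRt U k q i j =
     (let xj1 = (if j < k then xmin q (Suc j) else xmin q 1 + 1) in
      if j < i then maneR U (xmin q i) xj1 else maneR U (xmin q i + 1) xj1)"

(* tilde h_L(x_i; x_j),  with x_{i-k} = x_i - 1 *)
definition hLt :: "(real \<Rightarrow> real) \<Rightarrow> (nat \<Rightarrow> real) \<Rightarrow> nat \<Rightarrow> nat \<Rightarrow> ereal" where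
  "hLt U q i j =
     (if i \<le> j then maneR U (xmin q i) (xmin q j) else maneR U (xmin q i - 1) (xmin q j))"

definition Wcoef :: "(real \<Rightarrow> real) \<Rightarrow> nat \<Rightarrow> (nat \<Rightarrow> real) \<Rightarrow> nat \<Rightarrow> ereal" where
  "Wcoef U k q i = (MIN j \<in> {1..k}. hRt U k q i j + hLt U q i j)"

definition Wfun :: "(real \<Rightarrow> real) \<Rightarrow> nat \<Rightarrow> (nat \<Rightarrow> real) \<Rightarrow> real \<Rightarrow> ereal" where
  "Wfun U k q x = (MIN j \<in> {1..k}. Wcoef U k q j + peierls U x (xmin q j))"

definition weak_KAM_neg :: "(real \<Rightarrow> real) \<Rightarrow> (real \<Rightarrow> real) \<Rightarrow> bool" where
  "weak_KAM_neg U w \<longleftrightarrow>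
     continuous_on UNIV w \<and> (\<forall>x. w (x + 1) = w x) \<and>
     (\<forall>\<gamma> a b. a \<le> b \<and> abs_cont_on \<gamma> a b \<longrightarrow>
        ereal (w (\<gamma> b) - w (\<gamma> a)) \<le> action U \<gamma> a b) \<and>
     (\<forall>x. \<exists>\<gamma>. \<gamma> 0 = x \<and> (\<forall>a\<le>0. \<gamma> piecewise_C1_differentiable_on {a..0}) \<and>
        (\<forall>a b. a < b \<and> b \<le> 0 \<longrightarrow> ereal (w (\<gamma> b) - w (\<gamma> a)) = action U \<gamma> a b))"

end

theory Submission
  imports Defs
begin

text \<open>
  A weak KAM solution \<open>w\<close> is dominated by the action: \<open>w(y) \<le> w(x) + A(\<gamma>)\<close> for every curve from \<open>x\<close>
  to \<open>y\<close>. This gives \<open>w \<le> S\<^sub>t w\<close> and shows that \<open>w\<close> is below both infima.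

  For the converse, follow a calibrated curve \<open>\<gamma>\<close> backwards from \<open>y\<close>. Its action over any time
  interval is at most \<open>2 sup |w|\<close>. If it stayed \<open>\<delta>\<close>-away from the critical set, it could not
  cross a critical point, so \<open>U'\<close> would keep one sign and \<open>|U'| \<ge> m > 0\<close> along it; the inequality
  \<open>L(v, x) \<ge> l\<sigma>(v + U'(x)) - l\<^sup>2\<close> then makes the action grow linearly in time. Hence \<open>\<gamma>\<close> comes
  arbitrarily close to a critical point \<open>p\<close>, and a short segment from \<open>p\<close> to \<open>\<gamma>\<close> yields
  \<open>w(p) + h(y;p) \<le> w(y) + \<epsilon>\<close>.

  Finally, resting at a critical point \<open>z\<close> costs nothing, so \<open>h(\<cdot>;z)\<close> is the infimum over all
  times of the minimal action from \<open>z\<close>, and every \<open>c + h(\<cdot>;z)\<close> is fixed by \<open>S\<^sub>t\<close>. Invariance of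
  \<open>w = inf\<^sub>z (w(z) + h(\<cdot>;z))\<close> follows by monotonicity of \<open>S\<^sub>t\<close>, and that of \<open>W\<close> because \<open>S\<^sub>t\<close>
  commutes with finite minima.
\<close>

section \<open>Nonnegative integrals of non-measurable functions\<close>

text \<open>The integrand of the action contains the vector derivative of an arbitrary curve, which
  need not be measurable; additivity and translation invariance are therefore obtained through a
  measurable minorant with the same integral.\<close>

lemma nn_integral_measurable_minorant:
  fixes f :: "'a \<Rightarrow> ennreal"
  shows "\<exists>g\<in>borel_measurable M. (\<forall>x. g x \<le> f x) \<and> integral\<^sup>N M g = integral\<^sup>N M f"
proof -
  define G where "G = {g. simple_function M g \<and> g \<le> f}"
  have "(\<lambda>_. 0) \<in> G" by (simp add: le_fun_def G_def)
  then have ne: "integral\<^sup>S M ` G \<noteq> {}" by blast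
  from ennreal_Sup_countable_SUP[OF ne] obtain h
    where h: "incseq h" "range h \<subseteq> integral\<^sup>S M ` G" "Sup (integral\<^sup>S M ` G) = (SUP i. h i)"
    by (elim exE conjE)
  have "\<forall>n. \<exists>s. s \<in> G \<and> integral\<^sup>S M s = h n"
  proof
    fix n
    have "h n \<in> integral\<^sup>S M ` G" using h(2) by (rule subsetD) simp
    then obtain s where "s \<in> G" "h n = integral\<^sup>S M s" by (rule imageE)
    then show "\<exists>s. s \<in> G \<and> integral\<^sup>S M s = h n" by metis
  qed
  then obtain s where s: "\<And>n. s n \<in> G" "\<And>n. integral\<^sup>S M (s n) = h n" by metis
  have sf: "simple_function M (s n)" "s n \<le> f" for n using s(1)[of n] by (simp_all add: G_def)
  define g where "g = (\<lambda>x. SUP n. s n x)"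
  have meas: "g \<in> borel_measurable M"
    unfolding g_def by (rule borel_measurable_SUP) (simp_all add: borel_measurable_simple_function sf)
  have le: "\<forall>x. g x \<le> f x" unfolding g_def using sf(2) by (simp add: SUP_least le_fun_def)
  have "integral\<^sup>N M f \<le> integral\<^sup>N M g"
  proof -
    have "integral\<^sup>N M f = (SUP i. h i)" unfolding nn_integral_def using h(3) by (simp add: G_def)
    also have "\<dots> \<le> integral\<^sup>N M g"
    proof (rule SUP_least)
      fix n
      have "h n = integral\<^sup>N M (s n)" using s(2)[of n] sf(1)[of n] by (simp add: nn_integral_eq_simple_integral)
      also have "\<dots> \<le> integral\<^sup>N M g" unfolding g_def by (rule nn_integral_mono) (rule SUP_upper, simp)
      finally show "h n \<le> integral\<^sup>N M g" .
    qed
    finally show ?thesis .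
  qed
  moreover have "integral\<^sup>N M g \<le> integral\<^sup>N M f" using le by (intro nn_integral_mono) simp
  ultimately have "integral\<^sup>N M g = integral\<^sup>N M f" by (rule antisym[rotated])
  then show ?thesis using meas le by blast
qed

lemma nn_integral_indicator_split:
  fixes f :: "'a \<Rightarrow> ennreal"
  assumes A: "A \<in> sets M"
  shows "integral\<^sup>N M f = (\<integral>\<^sup>+x. f x * indicator A x \<partial>M) + (\<integral>\<^sup>+x. f x * indicator (- A) x \<partial>M)"
proof (rule antisym)
  obtain g where g: "g \<in> borel_measurable M" "\<forall>x. g x \<le> f x" "integral\<^sup>N M g = integral\<^sup>N M f"
    using nn_integral_measurable_minorant[where M=M and f=f] by blast
  have "integral\<^sup>N M g = (\<integral>\<^sup>+x. g x * indicator A x + g x * indicator (- A) x \<partial>M)"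
    by (intro nn_integral_cong) (auto split: split_indicator)
  also have "\<dots> = (\<integral>\<^sup>+x. g x * indicator A x \<partial>M) + (\<integral>\<^sup>+x. g x * indicator (- A) x \<partial>M)"
    using g(1) A by (intro nn_integral_add) auto
  also have "\<dots> \<le> (\<integral>\<^sup>+x. f x * indicator A x \<partial>M) + (\<integral>\<^sup>+x. f x * indicator (- A) x \<partial>M)"
    using g(2) by (intro add_mono nn_integral_mono) (auto intro: mult_right_mono)
  finally show "integral\<^sup>N M f \<le> (\<integral>\<^sup>+x. f x * indicator A x \<partial>M) + (\<integral>\<^sup>+x. f x * indicator (- A) x \<partial>M)"
    using g(3) by simp
next
  obtain g1 where g1: "g1 \<in> borel_measurable M" "\<forall>x. g1 x \<le> f x * indicator A x"
    "integral\<^sup>N M g1 = (\<integral>\<^sup>+x. f x * indicator A x \<partial>M)"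
    using nn_integral_measurable_minorant[where M=M and f="\<lambda>x. f x * indicator A x"] by blast
  obtain g2 where g2: "g2 \<in> borel_measurable M" "\<forall>x. g2 x \<le> f x * indicator (- A) x"
    "integral\<^sup>N M g2 = (\<integral>\<^sup>+x. f x * indicator (- A) x \<partial>M)"
    using nn_integral_measurable_minorant[where M=M and f="\<lambda>x. f x * indicator (- A) x"] by blast
  have "(\<integral>\<^sup>+x. f x * indicator A x \<partial>M) + (\<integral>\<^sup>+x. f x * indicator (- A) x \<partial>M)
      = (\<integral>\<^sup>+x. g1 x + g2 x \<partial>M)" using g1 g2 by (simp add: nn_integral_add)
  also have "\<dots> \<le> integral\<^sup>N M f"
  proof (rule nn_integral_mono)
    fix x
    show "g1 x + g2 x \<le> f x"
      using g1(2)[rule_format, of x] g2(2)[rule_format, of x] by (cases "x \<in> A") (auto simp: indicator_def)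
  qed
  finally show "(\<integral>\<^sup>+x. f x * indicator A x \<partial>M) + (\<integral>\<^sup>+x. f x * indicator (- A) x \<partial>M) \<le> integral\<^sup>N M f" .
qed

lemma nn_integral_lborel_translate:
  fixes f :: "real \<Rightarrow> ennreal"
  shows "(\<integral>\<^sup>+x. f (x + c) \<partial>lborel) = integral\<^sup>N lborel f"
proof -
  have ge: "integral\<^sup>N lborel h \<le> (\<integral>\<^sup>+x. h (x + d) \<partial>lborel)" for h :: "real \<Rightarrow> ennreal" and d
  proof -
    obtain g where g: "g \<in> borel_measurable lborel" "\<forall>x. g x \<le> h x" "integral\<^sup>N lborel g = integral\<^sup>N lborel h"
      using nn_integral_measurable_minorant[where M=lborel and f=h] by blast
    have "integral\<^sup>N lborel g = (\<integral>\<^sup>+x. g x \<partial>(distr lborel borel ((+) d)))"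
      by (simp only: lborel_distr_plus)
    also have "\<dots> = (\<integral>\<^sup>+x. g (d + x) \<partial>lborel)"
      by (rule nn_integral_distr) (use g(1) in simp_all)
    also have "\<dots> \<le> (\<integral>\<^sup>+x. h (x + d) \<partial>lborel)"
      using g(2) by (intro nn_integral_mono) (simp add: add.commute)
    finally show ?thesis using g(3) by simp
  qed
  show ?thesis
  proof (rule antisym)
    show "integral\<^sup>N lborel f \<le> (\<integral>\<^sup>+x. f (x + c) \<partial>lborel)" by (rule ge)
    have "(\<integral>\<^sup>+x. f (x + c) \<partial>lborel) \<le> (\<integral>\<^sup>+x. f (x + (-c) + c) \<partial>lborel)" by (rule ge)
    then show "(\<integral>\<^sup>+x. f (x + c) \<partial>lborel) \<le> integral\<^sup>N lborel f" by simp
  qed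
qed

section \<open>Periodic functions and the circle\<close>

lemma periodic_add_Ints:
  fixes f :: "real \<Rightarrow> 'b"
  assumes per: "\<And>x. f (x + 1) = f x" and n: "n \<in> \<int>"
  shows "f (x + n) = f x"
proof -
  have nat: "f (x + real m) = f x" for x m
    by (induction m arbitrary: x) (simp_all add: per add.assoc[symmetric])
  obtain i where i: "n = of_int i" using n by (auto elim: Ints_cases)
  show ?thesis
  proof (cases "i \<ge> 0")
    case True
    then show ?thesis using nat[of x "nat i"] i by simp
  next
    case False
    then show ?thesis using nat[of "x - real (nat (-i))" "nat (-i)"] i by simp
  qed
qed

lemma cong1_sym: "cong1 a b \<Longrightarrow> cong1 b a"
  unfolding cong1_def by (metis Ints_minus minus_diff_eq)

lemma cong1_trans: "cong1 a b \<Longrightarrow> cong1 b c \<Longrightarrow> cong1 a c"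
  unfolding cong1_def by (metis Ints_add diff_add_cancel add_diff_eq)

lemma cong1_refl: "cong1 a a"
  unfolding cong1_def by simp

lemma cong1_frac: "cong1 x (frac x)"
  unfolding cong1_def frac_def by simp

lemma frac_in_unit_interval: "frac x \<in> {0..<1}"
  by (simp add: frac_lt_1)

lemma periodic_cong1:
  fixes f :: "real \<Rightarrow> 'b"
  assumes per: "\<And>x. f (x + 1) = f x" and "cong1 a b"
  shows "f a = f b"
  using periodic_add_Ints[where f=f, OF per, of "a - b" b] assms(2) by (simp add: cong1_def)

lemma smooth_fun_DERIV:
  assumes "smooth_fun U"
  shows "(U has_real_derivative deriv U x) (at x)"
  using assms unfolding smooth_fun_def by (metis funpow_0 DERIV_deriv_iff_real_differentiable)

lemma smooth_fun_isCont_deriv: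
  assumes "smooth_fun U"
  shows "isCont (deriv U) x"
proof -
  have "deriv U differentiable (at x)"
    using assms unfolding smooth_fun_def by (metis funpow_0 funpow_Suc_right o_apply)
  then show ?thesis by (rule differentiable_imp_continuous_within)
qed

lemma skew_periodic_deriv_periodic:
  assumes "skew_periodic U"
  shows "deriv U (x + 1) = deriv U x"
proof -
  obtain Ut b where Ut: "smooth_fun Ut" "\<And>x. Ut (x + 1) = Ut x" "\<And>x. U x = Ut x - b * x"
    using assms unfolding skew_periodic_def by blast
  have dUt: "(Ut has_real_derivative deriv Ut z) (at z)" for z by (rule smooth_fun_DERIV[OF Ut(1)])
  have "U = (\<lambda>x. Ut x - b * x)" using Ut(3) by auto
  then have dU: "deriv U z = deriv Ut z - b" for z
    by (auto intro!: DERIV_imp_deriv derivative_eq_intros dUt)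
  have "((\<lambda>y. Ut (y + 1)) has_real_derivative deriv Ut (x + 1)) (at x)"
    using dUt[of "x + 1"] by (simp add: DERIV_shift)
  then have "(Ut has_real_derivative deriv Ut (x + 1)) (at x)"
    using Ut(2) by simp
  then have "deriv Ut (x + 1) = deriv Ut x" using dUt[of x] by (metis DERIV_unique)
  then show ?thesis using dU by simp
qed

lemma periodic_continuous_bounded:
  fixes f :: "real \<Rightarrow> real"
  assumes per: "\<And>x. f (x + 1) = f x" and c: "continuous_on UNIV f"
  obtains M where "\<And>x. \<bar>f x\<bar> \<le> M"
proof -
  have "compact (f ` {0..1})"
    by (rule compact_continuous_image) (auto intro: continuous_on_subset[OF c])
  then obtain M where M: "\<forall>y\<in>f ` {0..1}. \<bar>y\<bar> \<le> M"
    using compact_imp_bounded bounded_real by blast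
  have "\<bar>f x\<bar> \<le> M" for x
    using M periodic_cong1[where f=f, OF per cong1_frac, of x] frac_in_unit_interval[of x] by auto
  then show ?thesis by (rule that)
qed

lemma periodic_uniformly_continuous:
  fixes f :: "real \<Rightarrow> real"
  assumes per: "\<And>x. f (x + 1) = f x" and c: "continuous_on UNIV f" and e: "e > 0"
  obtains d where "d > 0" "\<And>x x'. \<bar>x - x'\<bar> < d \<Longrightarrow> \<bar>f x - f x'\<bar> < e"
proof -
  have "uniformly_continuous_on {-1..2} f"
    by (rule compact_uniformly_continuous) (auto intro: continuous_on_subset[OF c])
  then obtain d0 where d0: "d0 > 0"
    "\<And>x x'. x \<in> {-1..2} \<Longrightarrow> x' \<in> {-1..2} \<Longrightarrow> dist x' x < d0 \<Longrightarrow> dist (f x') (f x) < e"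
    unfolding uniformly_continuous_on_def using e by metis
  define d where "d = min d0 1"
  have d: "d > 0" using d0 unfolding d_def by simp
  have "\<bar>f x - f x'\<bar> < e" if "\<bar>x - x'\<bar> < d" for x x'
  proof -
    define n :: real where "n = of_int \<lfloor>x\<rfloor>"
    have fx: "f x = f (x - n)" and fx': "f x' = f (x' - n)"
      by (rule periodic_cong1[where f=f, OF per], simp add: cong1_def n_def)+
    have "0 \<le> x - n" "x - n < 1" using frac_in_unit_interval[of x] unfolding n_def frac_def by auto
    moreover have "x - x' < 1" "x' - x < 1" using that unfolding d_def by (auto simp: abs_less_iff)
    ultimately have "x - n \<in> {-1..2}" "x' - n \<in> {-1..2}" by auto
    moreover have "dist (x' - n) (x - n) < d0" using that unfolding d_def dist_real_def by auto
    ultimately have "dist (f (x' - n)) (f (x - n)) < e" using d0(2) by blast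
    then show ?thesis using fx fx' by (simp add: dist_real_def abs_minus_commute)
  qed
  with d show ?thesis by (rule that)
qed

section \<open>Absolute continuity\<close>

definition nonoverlapping_family :: "real \<Rightarrow> real \<Rightarrow> nat \<Rightarrow> (nat \<Rightarrow> real) \<Rightarrow> (nat \<Rightarrow> real) \<Rightarrow> bool" where
  "nonoverlapping_family s t n a b \<longleftrightarrow>
     (\<forall>i<n. s \<le> a i \<and> a i \<le> b i \<and> b i \<le> t) \<and> (\<forall>i. Suc i < n \<longrightarrow> b i \<le> a (Suc i))"

lemma abs_cont_on_iff:
  "abs_cont_on f s t \<longleftrightarrow> (\<forall>e>0. \<exists>d>0. \<forall>n a b. nonoverlapping_family s t n a b \<longrightarrow>
     (\<Sum>i<n. b i - a i) < d \<longrightarrow> (\<Sum>i<n. \<bar>f (b i) - f (a i)\<bar>) < e)"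
  unfolding abs_cont_on_def nonoverlapping_family_def by (simp only: imp_conjL)

lemma abs_cont_onE:
  assumes "abs_cont_on f s t" "e > 0"
  obtains d where "d > 0" "\<And>n a b. nonoverlapping_family s t n a b \<Longrightarrow> (\<Sum>i<n. b i - a i) < d \<Longrightarrow>
    (\<Sum>i<n. \<bar>f (b i) - f (a i)\<bar>) < e"
  using assms unfolding abs_cont_on_iff by meson

lemma abs_cont_onI:
  assumes "\<And>e. e > 0 \<Longrightarrow> \<exists>d>0. \<forall>n a b. nonoverlapping_family s t n a b \<longrightarrow> (\<Sum>i<n. b i - a i) < d \<longrightarrow>
    (\<Sum>i<n. \<bar>f (b i) - f (a i)\<bar>) < e"
  shows "abs_cont_on f s t"
  unfolding abs_cont_on_iff using assms by simp

lemma abs_cont_on_lipschitz: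
  assumes K: "K \<ge> 0" and L: "\<And>x y. x \<in> {s..t} \<Longrightarrow> y \<in> {s..t} \<Longrightarrow> \<bar>f x - f y\<bar> \<le> K * \<bar>x - y\<bar>"
  shows "abs_cont_on f s t"
proof (rule abs_cont_onI)
  fix e :: real assume e: "e > 0"
  define d where "d = e / (K + 1)"
  show "\<exists>d>0. \<forall>n a b. nonoverlapping_family s t n a b \<longrightarrow> (\<Sum>i<n. b i - a i) < d \<longrightarrow>
    (\<Sum>i<n. \<bar>f (b i) - f (a i)\<bar>) < e"
  proof (intro exI[of _ d] conjI allI impI)
    show "d > 0" using e K unfolding d_def by simp
    fix n a b assume h: "nonoverlapping_family s t n a b" and hs: "(\<Sum>i<n. b i - a i) < d"
    have "(\<Sum>i<n. \<bar>f (b i) - f (a i)\<bar>) \<le> (\<Sum>i<n. K * (b i - a i))"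
    proof (rule sum_mono)
      fix i assume "i \<in> {..<n}"
      then have "s \<le> a i" "a i \<le> b i" "b i \<le> t" using h unfolding nonoverlapping_family_def by auto
      then show "\<bar>f (b i) - f (a i)\<bar> \<le> K * (b i - a i)" using L[of "b i" "a i"] by auto
    qed
    also have "\<dots> = K * (\<Sum>i<n. b i - a i)" by (simp add: sum_distrib_left)
    also have "\<dots> \<le> K * d" using hs K by (intro mult_left_mono) simp_all
    also have "\<dots> < e" using e K unfolding d_def by (simp add: field_simps)
    finally show "(\<Sum>i<n. \<bar>f (b i) - f (a i)\<bar>) < e" .
  qed
qed

lemma abs_cont_on_const: "abs_cont_on (\<lambda>x. c) s t"
  by (rule abs_cont_on_lipschitz[of 0]) auto

lemma abs_cont_on_linear: "abs_cont_on (\<lambda>x. p + x * d) s t"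
  by (rule abs_cont_on_lipschitz[of "\<bar>d\<bar>"]) (auto simp: left_diff_distrib[symmetric] abs_mult)

lemma abs_cont_on_subinterval:
  assumes "abs_cont_on f s t" "s \<le> s'" "t' \<le> t"
  shows "abs_cont_on f s' t'"
proof (rule abs_cont_onI)
  fix e :: real assume "e > 0"
  then obtain d where d: "d > 0" "\<And>n a b. nonoverlapping_family s t n a b \<Longrightarrow> (\<Sum>i<n. b i - a i) < d \<Longrightarrow>
    (\<Sum>i<n. \<bar>f (b i) - f (a i)\<bar>) < e"
    using abs_cont_onE[OF assms(1) \<open>e > 0\<close>] by blast
  have "nonoverlapping_family s t n a b" if "nonoverlapping_family s' t' n a b" for n a b
    using that assms(2,3) unfolding nonoverlapping_family_def by force
  with d show "\<exists>d>0. \<forall>n a b. nonoverlapping_family s' t' n a b \<longrightarrow> (\<Sum>i<n. b i - a i) < d \<longrightarrow>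
    (\<Sum>i<n. \<bar>f (b i) - f (a i)\<bar>) < e" by blast
qed

lemma abs_cont_on_cong:
  assumes "abs_cont_on f s t" "\<And>x. x \<in> {s..t} \<Longrightarrow> f x = g x"
  shows "abs_cont_on g s t"
proof (rule abs_cont_onI)
  fix e :: real assume "e > 0"
  then obtain d where d: "d > 0" "\<And>n a b. nonoverlapping_family s t n a b \<Longrightarrow> (\<Sum>i<n. b i - a i) < d \<Longrightarrow>
    (\<Sum>i<n. \<bar>f (b i) - f (a i)\<bar>) < e"
    using abs_cont_onE[OF assms(1) \<open>e > 0\<close>] by blast
  have "(\<Sum>i<n. \<bar>g (b i) - g (a i)\<bar>) = (\<Sum>i<n. \<bar>f (b i) - f (a i)\<bar>)"
    if "nonoverlapping_family s t n a b" for n a b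
    using that assms(2) unfolding nonoverlapping_family_def by (intro sum.cong) auto
  with d show "\<exists>d>0. \<forall>n a b. nonoverlapping_family s t n a b \<longrightarrow> (\<Sum>i<n. b i - a i) < d \<longrightarrow>
    (\<Sum>i<n. \<bar>g (b i) - g (a i)\<bar>) < e" by metis
qed

lemma abs_cont_on_translate:
  assumes "abs_cont_on f (s + c) (t + c)"
  shows "abs_cont_on (\<lambda>x. f (x + c) + m) s t"
proof (rule abs_cont_onI)
  fix e :: real assume "e > 0"
  then obtain d where d: "d > 0" "\<And>n a b. nonoverlapping_family (s + c) (t + c) n a b \<Longrightarrow>
    (\<Sum>i<n. b i - a i) < d \<Longrightarrow> (\<Sum>i<n. \<bar>f (b i) - f (a i)\<bar>) < e"
    using abs_cont_onE[OF assms(1) \<open>e > 0\<close>] by blast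
  show "\<exists>d>0. \<forall>n a b. nonoverlapping_family s t n a b \<longrightarrow> (\<Sum>i<n. b i - a i) < d \<longrightarrow>
    (\<Sum>i<n. \<bar>(f (b i + c) + m) - (f (a i + c) + m)\<bar>) < e"
  proof (intro exI[of _ d] conjI allI impI)
    fix n a b assume "nonoverlapping_family s t n a b" and "(\<Sum>i<n. b i - a i) < d"
    then have "nonoverlapping_family (s + c) (t + c) n (\<lambda>i. a i + c) (\<lambda>i. b i + c)"
      and "(\<Sum>i<n. (b i + c) - (a i + c)) < d"
      unfolding nonoverlapping_family_def by auto
    then show "(\<Sum>i<n. \<bar>(f (b i + c) + m) - (f (a i + c) + m)\<bar>) < e" using d(2) by fastforce
  qed (use d in simp)
qed

lemma abs_cont_on_concat:
  assumes f1: "abs_cont_on f s m" and f2: "abs_cont_on f m t" and sm: "s \<le> m" and mt: "m \<le> t"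
  shows "abs_cont_on f s t"
proof (rule abs_cont_onI)
  fix e :: real assume "e > 0"
  then have e2: "e/2 > 0" by simp
  obtain d1 where d1: "d1 > 0" "\<And>n a b. nonoverlapping_family s m n a b \<Longrightarrow> (\<Sum>i<n. b i - a i) < d1 \<Longrightarrow>
    (\<Sum>i<n. \<bar>f (b i) - f (a i)\<bar>) < e/2"
    using abs_cont_onE[OF f1 e2] by blast
  obtain d2 where d2: "d2 > 0" "\<And>n a b. nonoverlapping_family m t n a b \<Longrightarrow> (\<Sum>i<n. b i - a i) < d2 \<Longrightarrow>
    (\<Sum>i<n. \<bar>f (b i) - f (a i)\<bar>) < e/2"
    using abs_cont_onE[OF f2 e2] by blast
  show "\<exists>d>0. \<forall>n a b. nonoverlapping_family s t n a b \<longrightarrow> (\<Sum>i<n. b i - a i) < d \<longrightarrow>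
    (\<Sum>i<n. \<bar>f (b i) - f (a i)\<bar>) < e"
  proof (intro exI[of _ "min d1 d2"] conjI allI impI)
    fix n a b assume h: "nonoverlapping_family s t n a b" and hs: "(\<Sum>i<n. b i - a i) < min d1 d2"
    define a1 where "a1 i = min (a i) m" for i
    define b1 where "b1 i = min (b i) m" for i
    define a2 where "a2 i = max (a i) m" for i
    define b2 where "b2 i = max (b i) m" for i
    have ab: "a i \<le> b i" if "i < n" for i using h that unfolding nonoverlapping_family_def by auto
    have "b1 i - a1 i \<le> b i - a i" "b2 i - a2 i \<le> b i - a i" if "i < n" for i
      using ab[OF that] unfolding a1_def b1_def a2_def b2_def by auto
    then have "(\<Sum>i<n. b1 i - a1 i) \<le> (\<Sum>i<n. b i - a i)" "(\<Sum>i<n. b2 i - a2 i) \<le> (\<Sum>i<n. b i - a i)"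
      by (auto intro!: sum_mono)
    then have S1: "(\<Sum>i<n. b1 i - a1 i) < d1" and S2: "(\<Sum>i<n. b2 i - a2 i) < d2" using hs by linarith+
    have c1: "nonoverlapping_family s m n a1 b1"
      using h sm unfolding a1_def b1_def nonoverlapping_family_def by (auto simp: min_def)
    have c2: "nonoverlapping_family m t n a2 b2"
      using h mt unfolding a2_def b2_def nonoverlapping_family_def by (auto simp: max_def)
    have "(\<Sum>i<n. \<bar>f (b i) - f (a i)\<bar>) \<le> (\<Sum>i<n. \<bar>f (b1 i) - f (a1 i)\<bar> + \<bar>f (b2 i) - f (a2 i)\<bar>)"
    proof (rule sum_mono)
      fix i assume "i \<in> {..<n}"
      then have "a i \<le> b i" using ab by auto
      then consider "b i \<le> m" | "m \<le> a i" | "a i < m" "m < b i" by linarith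
      then show "\<bar>f (b i) - f (a i)\<bar> \<le> \<bar>f (b1 i) - f (a1 i)\<bar> + \<bar>f (b2 i) - f (a2 i)\<bar>"
        using \<open>a i \<le> b i\<close> unfolding a1_def b1_def a2_def b2_def by cases auto
    qed
    also have "\<dots> = (\<Sum>i<n. \<bar>f (b1 i) - f (a1 i)\<bar>) + (\<Sum>i<n. \<bar>f (b2 i) - f (a2 i)\<bar>)"
      by (rule sum.distrib)
    also have "\<dots> < e/2 + e/2" using d1(2)[OF c1 S1] d2(2)[OF c2 S2] by linarith
    finally show "(\<Sum>i<n. \<bar>f (b i) - f (a i)\<bar>) < e" by simp
  qed (use d1 d2 in simp)
qed

lemma sum_increments_le_total:
  fixes F :: "real \<Rightarrow> real"
  assumes h: "nonoverlapping_family a b n as bs" and ab: "a \<le> b"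
    and mono: "\<And>x y. a \<le> x \<Longrightarrow> x \<le> y \<Longrightarrow> y \<le> b \<Longrightarrow> F x \<le> F y"
  shows "(\<Sum>i<n. F (bs i) - F (as i)) \<le> F b - F a"
proof -
  have partial: "(\<Sum>i<Suc m. F (bs i) - F (as i)) \<le> F (bs m) - F a"
    if "nonoverlapping_family a b (Suc m) as bs" for m
    using that
  proof (induction m)
    case 0
    then show ?case using mono[of a "as 0"] unfolding nonoverlapping_family_def by auto
  next
    case (Suc m)
    then have "nonoverlapping_family a b (Suc m) as bs"
      and "a \<le> bs m" "bs m \<le> as (Suc m)" "as (Suc m) \<le> b"
      unfolding nonoverlapping_family_def by (auto dest: spec[of _ m])
    then show ?case using Suc.IH mono[of "bs m" "as (Suc m)"] by simp
  qed
  show ?thesis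
  proof (cases n)
    case 0
    then show ?thesis using mono[of a b] ab by simp
  next
    case (Suc m)
    then have "a \<le> bs m" "bs m \<le> b" using h unfolding nonoverlapping_family_def by (auto dest: spec[of _ m])
    then show ?thesis using partial[of m] h Suc mono[of "bs m" b] by simp
  qed
qed

text \<open>Absolute continuity from a family of bounds \<open>K(y - x) + (F y - F x)/l\<close> with \<open>F\<close> increasing:
  the second term is made small uniformly by taking \<open>l\<close> large, and then the first by \<open>y - x\<close> small.\<close>

lemma abs_cont_on_dominated:
  fixes F :: "real \<Rightarrow> real"
  assumes mono: "\<And>x y. a \<le> x \<Longrightarrow> x \<le> y \<Longrightarrow> y \<le> b \<Longrightarrow> F x \<le> F y" and ab: "a \<le> b"
    and dom: "\<And>l. l > 0 \<Longrightarrow> \<exists>K\<ge>0. \<forall>x y. a \<le> x \<longrightarrow> x \<le> y \<longrightarrow> y \<le> b \<longrightarrow>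
      \<bar>f y - f x\<bar> \<le> K * (y - x) + (F y - F x) / l"
  shows "abs_cont_on f a b"
proof (rule abs_cont_onI)
  fix e :: real assume e: "e > 0"
  define B where "B = F b - F a"
  have B: "0 \<le> B" using mono[of a b] ab unfolding B_def by simp
  define l where "l = 2 * (B + 1) / e"
  have l: "l > 0" using B e unfolding l_def by simp
  obtain K where K: "K \<ge> 0"
    "\<And>x y. a \<le> x \<Longrightarrow> x \<le> y \<Longrightarrow> y \<le> b \<Longrightarrow> \<bar>f y - f x\<bar> \<le> K * (y - x) + (F y - F x) / l"
    using dom[OF l] by blast
  define d where "d = e / (2 * (K + 1))"
  show "\<exists>d>0. \<forall>n as bs. nonoverlapping_family a b n as bs \<longrightarrow> (\<Sum>i<n. bs i - as i) < d \<longrightarrow>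
    (\<Sum>i<n. \<bar>f (bs i) - f (as i)\<bar>) < e"
  proof (intro exI[of _ d] conjI allI impI)
    show "d > 0" using e K unfolding d_def by simp
    fix n as bs assume h: "nonoverlapping_family a b n as bs" and hs: "(\<Sum>i<n. bs i - as i) < d"
    have "(\<Sum>i<n. \<bar>f (bs i) - f (as i)\<bar>) \<le> (\<Sum>i<n. K * (bs i - as i) + (F (bs i) - F (as i)) / l)"
    proof (rule sum_mono)
      fix i assume "i \<in> {..<n}"
      then have "a \<le> as i" "as i \<le> bs i" "bs i \<le> b" using h unfolding nonoverlapping_family_def by auto
      then show "\<bar>f (bs i) - f (as i)\<bar> \<le> K * (bs i - as i) + (F (bs i) - F (as i)) / l" by (rule K(2))
    qed
    also have "\<dots> = K * (\<Sum>i<n. bs i - as i) + (\<Sum>i<n. F (bs i) - F (as i)) / l"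
      by (simp add: sum.distrib sum_distrib_left sum_divide_distrib)
    also have "\<dots> \<le> K * d + B / l"
    proof (rule add_mono)
      show "K * (\<Sum>i<n. bs i - as i) \<le> K * d" using hs K by (intro mult_left_mono) auto
      show "(\<Sum>i<n. F (bs i) - F (as i)) / l \<le> B / l"
        using sum_increments_le_total[where F=F, OF h ab mono] l unfolding B_def by (simp add: divide_right_mono)
    qed
    also have "K * d < e / 2" using e K unfolding d_def by (simp add: field_simps)
    also have "B / l < e / 2" using e B unfolding l_def by (simp add: field_simps)
    finally show "(\<Sum>i<n. \<bar>f (bs i) - f (as i)\<bar>) < e" by simp
  qed
qed

section \<open>The action\<close>

definition action_ennreal :: "(real \<Rightarrow> real) \<Rightarrow> (real \<Rightarrow> real) \<Rightarrow> real \<Rightarrow> real \<Rightarrow> ennreal" where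
  "action_ennreal U \<gamma> a b =
     (\<integral>\<^sup>+ t. ennreal (Lag U (vector_derivative \<gamma> (at t)) (\<gamma> t)) * indicator {a..b} t \<partial>lborel)"

lemma action_eq_action_ennreal: "action U \<gamma> a b = enn2ereal (action_ennreal U \<gamma> a b)"
proof -
  have "enn2ereal I = (if I = \<infinity> then \<infinity> else ereal (enn2real I))" for I :: ennreal
    by (cases I) (auto simp: enn2real_def)
  then show ?thesis unfolding action_def action_ennreal_def Let_def by simp
qed

lemma action_nonneg: "0 \<le> action U \<gamma> a b"
  by (simp add: action_eq_action_ennreal)

lemma Lag_nonneg: "0 \<le> Lag U s x"
  unfolding Lag_def by simp

lemma vector_derivative_translate_time:
  fixes \<gamma> :: "real \<Rightarrow> real"
  shows "vector_derivative (\<lambda>s. \<gamma> (s + c)) (at t) = vector_derivative \<gamma> (at (t + c))"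
proof -
  have "((\<lambda>s. \<gamma> (s + c)) has_vector_derivative d) (at t) \<longleftrightarrow> (\<gamma> has_vector_derivative d) (at (t + c))" for d
    using DERIV_shift[of \<gamma> d t c] by (simp add: has_real_derivative_iff_has_vector_derivative)
  then show ?thesis unfolding vector_derivative_def by simp
qed

lemma vector_derivative_add_const: "vector_derivative (\<lambda>s. \<gamma> s + n) (at t) = vector_derivative \<gamma> (at t)"
  unfolding vector_derivative_def by (simp add: has_vector_derivative_add_const)

lemma vector_derivative_linear: "vector_derivative (\<lambda>s. p + s * d) (at t) = (d::real)"
proof -
  have "((\<lambda>s. p + s * d) has_real_derivative d) (at t)" by (auto intro!: derivative_eq_intros)
  then show ?thesis by (simp add: has_real_derivative_iff_has_vector_derivative vector_derivative_at)
qed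

lemma action_ennreal_split:
  assumes "a \<le> c" "c \<le> b"
  shows "action_ennreal U \<gamma> a b = action_ennreal U \<gamma> a c + action_ennreal U \<gamma> c b"
proof -
  define F where "F t = ennreal (Lag U (vector_derivative \<gamma> (at t)) (\<gamma> t))" for t
  have "action_ennreal U \<gamma> a b = (\<integral>\<^sup>+t. F t * indicator {a..b} t * indicator {a..c} t \<partial>lborel)
      + (\<integral>\<^sup>+t. F t * indicator {a..b} t * indicator (- {a..c}) t \<partial>lborel)"
    unfolding action_ennreal_def F_def by (rule nn_integral_indicator_split) simp
  also have "(\<integral>\<^sup>+t. F t * indicator {a..b} t * indicator {a..c} t \<partial>lborel) = action_ennreal U \<gamma> a c"
    unfolding action_ennreal_def F_def using assms by (intro nn_integral_cong) (auto split: split_indicator)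
  also have "(\<integral>\<^sup>+t. F t * indicator {a..b} t * indicator (- {a..c}) t \<partial>lborel) = action_ennreal U \<gamma> c b"
    unfolding action_ennreal_def F_def[symmetric]
  proof (rule nn_integral_cong_AE)
    have "AE t in lborel. t \<noteq> c" by (rule AE_lborel_singleton)
    then show "AE t in lborel. F t * indicator {a..b} t * indicator (- {a..c}) t = F t * indicator {c..b} t"
      by eventually_elim (use assms in \<open>auto split: split_indicator\<close>)
  qed
  finally show ?thesis .
qed

lemma action_split:
  assumes "a \<le> c" "c \<le> b"
  shows "action U \<gamma> a b = action U \<gamma> a c + action U \<gamma> c b"
  using action_ennreal_split[OF assms] by (simp add: action_eq_action_ennreal plus_ennreal.rep_eq)

lemma action_cong_open:
  assumes "\<And>t. t \<in> {a<..<b} \<Longrightarrow> \<gamma> t = \<gamma>' t"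
  shows "action U \<gamma> a b = action U \<gamma>' a b"
  unfolding action_eq_action_ennreal action_ennreal_def
proof (intro arg_cong[where f=enn2ereal] nn_integral_cong_AE)
  have "AE t in lborel. t \<noteq> a" "AE t in lborel. t \<noteq> b" by (rule AE_lborel_singleton)+
  then show "AE t in lborel. ennreal (Lag U (vector_derivative \<gamma> (at t)) (\<gamma> t)) * indicator {a..b} t =
      ennreal (Lag U (vector_derivative \<gamma>' (at t)) (\<gamma>' t)) * indicator {a..b} t"
  proof eventually_elim
    case (elim t)
    show ?case
    proof (cases "t \<in> {a<..<b}")
      case True
      then have "\<forall>\<^sub>F s in nhds t. s \<in> {a<..<b}" by (intro eventually_nhds_in_open) auto
      then have "vector_derivative \<gamma> (at t) = vector_derivative \<gamma>' (at t)"
        by (intro vector_derivative_cong_eq) (auto elim!: eventually_mono simp: assms)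
      then show ?thesis using assms True by simp
    next
      case False
      then show ?thesis using elim by auto
    qed
  qed
qed

lemma action_translate_time: "action U (\<lambda>s. \<gamma> (s + c)) a b = action U \<gamma> (a + c) (b + c)"
proof -
  define G where "G t = ennreal (Lag U (vector_derivative \<gamma> (at t)) (\<gamma> t)) * indicator {a+c..b+c} t" for t
  have "action_ennreal U (\<lambda>s. \<gamma> (s + c)) a b = (\<integral>\<^sup>+t. G (t + c) \<partial>lborel)"
    unfolding action_ennreal_def G_def vector_derivative_translate_time
    by (intro nn_integral_cong) (auto split: split_indicator)
  also have "\<dots> = integral\<^sup>N lborel G" by (rule nn_integral_lborel_translate)
  finally show ?thesis unfolding action_eq_action_ennreal action_ennreal_def G_def by simp
qed

lemma action_translate_space:
  assumes per: "\<And>x. deriv U (x + 1) = deriv U x" and n: "n \<in> \<int>"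
  shows "action U (\<lambda>s. \<gamma> s + n) a b = action U \<gamma> a b"
proof -
  have "deriv U (\<gamma> t + n) = deriv U (\<gamma> t)" for t
    by (rule periodic_add_Ints[where f="deriv U", OF per n])
  then show ?thesis
    unfolding action_eq_action_ennreal action_ennreal_def Lag_def vector_derivative_add_const by simp
qed

lemma action_refl: "action U \<gamma> a a = 0"
proof -
  have "action_ennreal U \<gamma> a a = 0" unfolding action_ennreal_def by simp
  then show ?thesis by (simp add: action_eq_action_ennreal zero_ennreal.rep_eq)
qed

lemma action_const_critical:
  assumes "deriv U z = 0"
  shows "action U (\<lambda>s. z) a b = 0"
  unfolding action_eq_action_ennreal action_ennreal_def vector_derivative_const_at Lag_def
  using assms by (simp add: zero_ennreal.rep_eq)

definition concat_curve :: "(real \<Rightarrow> real) \<Rightarrow> real \<Rightarrow> (real \<Rightarrow> real) \<Rightarrow> real \<Rightarrow> real" where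
  "concat_curve \<gamma>1 T1 \<gamma>2 = (\<lambda>s. if s \<le> T1 then \<gamma>1 s else \<gamma>2 (s - T1) + (\<gamma>1 T1 - \<gamma>2 0))"

lemma abs_cont_on_concat_curve:
  assumes "abs_cont_on \<gamma>1 0 T1" "abs_cont_on \<gamma>2 0 T2" "0 \<le> T1" "0 \<le> T2"
  shows "abs_cont_on (concat_curve \<gamma>1 T1 \<gamma>2) 0 (T1 + T2)"
proof (rule abs_cont_on_concat[of _ 0 T1])
  show "abs_cont_on (concat_curve \<gamma>1 T1 \<gamma>2) 0 T1"
    by (rule abs_cont_on_cong[OF assms(1)]) (simp add: concat_curve_def)
  have "abs_cont_on \<gamma>2 (T1 + - T1) (T1 + T2 + - T1)" using assms(2) by simp
  then have "abs_cont_on (\<lambda>s. \<gamma>2 (s + - T1) + (\<gamma>1 T1 - \<gamma>2 0)) T1 (T1 + T2)"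
    by (rule abs_cont_on_translate)
  then show "abs_cont_on (concat_curve \<gamma>1 T1 \<gamma>2) T1 (T1 + T2)"
    by (rule abs_cont_on_cong) (auto simp: concat_curve_def)
qed (use assms in auto)

lemma action_concat_curve:
  assumes per: "\<And>x. deriv U (x + 1) = deriv U x" and n: "\<gamma>1 T1 - \<gamma>2 0 \<in> \<int>" and "0 \<le> T1" "0 \<le> T2"
  shows "action U (concat_curve \<gamma>1 T1 \<gamma>2) 0 (T1 + T2) = action U \<gamma>1 0 T1 + action U \<gamma>2 0 T2"
proof -
  have "action U (concat_curve \<gamma>1 T1 \<gamma>2) 0 (T1 + T2)
      = action U (concat_curve \<gamma>1 T1 \<gamma>2) 0 T1 + action U (concat_curve \<gamma>1 T1 \<gamma>2) T1 (T1 + T2)"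
    by (rule action_split) (use assms in auto)
  also have "action U (concat_curve \<gamma>1 T1 \<gamma>2) 0 T1 = action U \<gamma>1 0 T1"
    by (rule action_cong_open) (simp add: concat_curve_def)
  also have "action U (concat_curve \<gamma>1 T1 \<gamma>2) T1 (T1 + T2)
      = action U (\<lambda>s. \<gamma>2 (s + - T1) + (\<gamma>1 T1 - \<gamma>2 0)) T1 (T1 + T2)"
    by (rule action_cong_open) (simp add: concat_curve_def)
  also have "\<dots> = action U (\<lambda>s. \<gamma>2 (s + - T1)) T1 (T1 + T2)"
    by (rule action_translate_space[OF per n])
  also have "\<dots> = action U \<gamma>2 0 T2"
    using action_translate_time[of U \<gamma>2 "- T1" T1 "T1 + T2"] by simp
  finally show ?thesis .
qed

section \<open>Minimal action, Peierls barrier and the Lax--Oleinik semigroup\<close>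

lemma ereal_le_add_INF:
  fixes c X :: ereal
  assumes "\<And>i. i \<in> I \<Longrightarrow> X \<le> c + f i" "c \<noteq> -\<infinity>" "\<And>i. i \<in> I \<Longrightarrow> 0 \<le> f i"
  shows "X \<le> c + (INF i\<in>I. f i)"
proof (cases "I = {}")
  case True
  then have "c + (INF i\<in>I. f i) = \<infinity>" using assms(2) by (simp add: top_ereal_def)
  then show ?thesis by (rule ssubst[where P="\<lambda>u. X \<le> u"]) simp
next
  case False
  have "X \<le> (INF i\<in>I. c + f i)" using assms(1) by (rule INF_greatest)
  also have "\<dots> = c + (INF i\<in>I. f i)" using False assms(2,3) by (rule INF_ereal_add_right)
  finally show ?thesis .
qed

lemma ereal_le_add_INF_INF:
  fixes f :: "'a \<Rightarrow> ereal" and g :: "'b \<Rightarrow> ereal"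
  assumes le: "\<And>a b. a \<in> A \<Longrightarrow> b \<in> B \<Longrightarrow> c \<le> f a + g b"
    and f0: "\<And>a. a \<in> A \<Longrightarrow> 0 \<le> f a" and g0: "\<And>b. b \<in> B \<Longrightarrow> 0 \<le> g b"
  shows "c \<le> (INF a\<in>A. f a) + (INF b\<in>B. g b)"
proof (cases "A = {} \<or> B = {}")
  case True
  have i1: "0 \<le> (INF a\<in>A. f a)" using f0 by (rule INF_greatest)
  have i2: "0 \<le> (INF b\<in>B. g b)" using g0 by (rule INF_greatest)
  from True show ?thesis
  proof
    assume "A = {}"
    then have "(INF a\<in>A. f a) + (INF b\<in>B. g b) = \<infinity>" using i2 by (simp add: top_ereal_def)
    then show ?thesis by (rule ssubst[where P="\<lambda>u. c \<le> u"]) simp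
  next
    assume "B = {}"
    then have "(INF a\<in>A. f a) + (INF b\<in>B. g b) = \<infinity>" using i1 by (simp add: top_ereal_def)
    then show ?thesis by (rule ssubst[where P="\<lambda>u. c \<le> u"]) simp
  qed
next
  case False
  have i2: "0 \<le> (INF b\<in>B. g b)" using g0 by (rule INF_greatest)
  have "(INF a\<in>A. f a) + (INF b\<in>B. g b) = (INF a\<in>A. f a + (INF b\<in>B. g b))"
    using False i2 f0 by (intro INF_ereal_add_left[symmetric]) auto
  also have "\<dots> = (INF a\<in>A. (INF b\<in>B. f a + g b))"
  proof (rule INF_cong[OF refl])
    fix a assume a: "a \<in> A"
    show "f a + (INF b\<in>B. g b) = (INF b\<in>B. f a + g b)"
      using False f0[OF a] g0 by (intro INF_ereal_add_right[symmetric]) auto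
  qed
  also have "c \<le> \<dots>" using le by (intro INF_greatest) auto
  finally show ?thesis by simp
qed

lemma minact_le_action:
  assumes "abs_cont_on \<gamma> 0 T" "\<gamma> 0 = x" "cong1 (\<gamma> T) y"
  shows "minact U T x y \<le> action U \<gamma> 0 T"
  unfolding minact_def by (rule INF_lower) (use assms in simp)

lemma minact_nonneg: "0 \<le> minact U T x y"
  unfolding minact_def by (rule INF_greatest) (rule action_nonneg)

lemma minact_le_action_translate:
  assumes per: "\<And>x. deriv U (x + 1) = deriv U x" and ac: "abs_cont_on \<gamma> s T" and sT: "s \<le> T"
    and x: "\<gamma> s - x \<in> \<int>" and y: "cong1 (\<gamma> T) y"
  shows "minact U (T - s) x y \<le> action U \<gamma> s T"
proof -
  define \<gamma>' where "\<gamma>' r = \<gamma> (r + s) + (x - \<gamma> s)" for r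
  have "minact U (T - s) x y \<le> action U \<gamma>' 0 (T - s)"
  proof (rule minact_le_action)
    show "abs_cont_on \<gamma>' 0 (T - s)"
      unfolding \<gamma>'_def by (rule abs_cont_on_translate) (use ac in simp)
    have "cong1 (\<gamma>' (T - s)) (\<gamma> T)"
      unfolding \<gamma>'_def cong1_def using x by (simp add: Ints_minus[of "\<gamma> s - x", simplified])
    then show "cong1 (\<gamma>' (T - s)) y" using y by (rule cong1_trans)
  qed (simp add: \<gamma>'_def)
  also have "action U \<gamma>' 0 (T - s) = action U (\<lambda>r. \<gamma> (r + s)) 0 (T - s)"
    unfolding \<gamma>'_def
    by (rule action_translate_space[OF per]) (use x in \<open>simp add: Ints_minus[of "\<gamma> s - x", simplified]\<close>)
  also have "\<dots> = action U \<gamma> s T"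
    using action_translate_time[of U \<gamma> s 0 "T - s"] by simp
  finally show ?thesis .
qed

lemma minact_triangle:
  assumes per: "\<And>x. deriv U (x + 1) = deriv U x" and "0 \<le> T1" "0 \<le> T2"
  shows "minact U (T1 + T2) x y \<le> minact U T1 x z + minact U T2 z y"
proof -
  have "minact U (T1 + T2) x y \<le> action U \<gamma>1 0 T1 + action U \<gamma>2 0 T2"
    if g1: "abs_cont_on \<gamma>1 0 T1" "\<gamma>1 0 = x" "cong1 (\<gamma>1 T1) z"
      and g2: "abs_cont_on \<gamma>2 0 T2" "\<gamma>2 0 = z" "cong1 (\<gamma>2 T2) y" for \<gamma>1 \<gamma>2
  proof -
    have n: "\<gamma>1 T1 - \<gamma>2 0 \<in> \<int>" using g1(3) g2(2) by (simp add: cong1_def)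
    have "cong1 (concat_curve \<gamma>1 T1 \<gamma>2 (T1 + T2)) (\<gamma>2 T2)"
    proof (cases "T2 = 0")
      case True
      then show ?thesis using g1(3) g2(2) by (simp add: concat_curve_def)
    next
      case False
      then show ?thesis using n assms(3) by (simp add: concat_curve_def cong1_def)
    qed
    then have "minact U (T1 + T2) x y \<le> action U (concat_curve \<gamma>1 T1 \<gamma>2) 0 (T1 + T2)"
      using abs_cont_on_concat_curve[OF g1(1) g2(1) assms(2,3)] g1(2) g2(3) assms(2)
      by (intro minact_le_action) (auto simp: concat_curve_def intro: cong1_trans)
    also have "\<dots> = action U \<gamma>1 0 T1 + action U \<gamma>2 0 T2"
      by (rule action_concat_curve) (use per n assms(2,3) in auto)
    finally show ?thesis .
  qed
  then show ?thesis
    unfolding minact_def[of U T1 x z] minact_def[of U T2 z y]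
    by (intro ereal_le_add_INF_INF) (auto simp: action_nonneg)
qed

lemma minact_antimono_critical:
  assumes per: "\<And>x. deriv U (x + 1) = deriv U x" and z: "deriv U z = 0" and "0 \<le> T" "T \<le> T'"
  shows "minact U T' z y \<le> minact U T z y"
proof -
  have "minact U (T' - T) z z \<le> action U (\<lambda>s. z) 0 (T' - T)"
    by (rule minact_le_action) (auto simp: abs_cont_on_const cong1_refl)
  then have rest: "minact U (T' - T) z z \<le> 0" by (simp add: action_const_critical[OF z])
  have "minact U ((T' - T) + T) z y \<le> minact U (T' - T) z z + minact U T z y"
    by (rule minact_triangle[OF per]) (use assms in auto)
  also have "\<dots> \<le> minact U T z y" using add_right_mono[OF rest] by simp
  finally show ?thesis by simp
qed

lemma peierls_eq_INF_minact:
  assumes per: "\<And>x. deriv U (x + 1) = deriv U x" and z: "deriv U z = 0"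
  shows "peierls U y z = (INF T\<in>{0..}. minact U T z y)"
  unfolding peierls_def
proof (rule antisym)
  show "(INF T\<in>{0..}. minact U T z y) \<le> Liminf at_top (\<lambda>T. minact U T z y)"
    by (rule Liminf_bounded) (auto simp: eventually_at_top_linorder intro!: exI[of _ 0] INF_lower)
  show "Liminf at_top (\<lambda>T. minact U T z y) \<le> (INF T\<in>{0..}. minact U T z y)"
  proof (rule INF_greatest)
    fix T0 :: real assume "T0 \<in> {0..}"
    then have "\<forall>\<^sub>F T in at_top. minact U T z y \<le> minact U T0 z y"
      unfolding eventually_at_top_linorder by (auto intro!: exI[of _ T0] minact_antimono_critical[OF per z])
    then show "Liminf at_top (\<lambda>T. minact U T z y) \<le> minact U T0 z y"
      by (intro Liminf_le) simp_all
  qed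
qed

lemma peierls_le_minact:
  assumes per: "\<And>x. deriv U (x + 1) = deriv U x" and z: "deriv U z = 0" and "0 \<le> T"
  shows "peierls U y z \<le> minact U T z y"
  unfolding peierls_eq_INF_minact[OF per z] by (rule INF_lower) (use assms in simp)

lemma peierls_nonneg: "0 \<le> peierls U y z"
  unfolding peierls_def by (rule Liminf_bounded) (simp add: minact_nonneg)

lemma peierls_self_critical:
  assumes per: "\<And>x. deriv U (x + 1) = deriv U x" and z: "deriv U z = 0"
  shows "peierls U z z = 0"
proof (rule antisym)
  have "peierls U z z \<le> minact U 0 z z" by (rule peierls_le_minact[OF per z]) simp
  also have "\<dots> \<le> action U (\<lambda>s. z) 0 0" by (rule minact_le_action) (auto simp: abs_cont_on_const cong1_refl)
  finally show "peierls U z z \<le> 0" by (simp add: action_refl)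
qed (rule peierls_nonneg)

lemma peierls_le_add_minact:
  assumes per: "\<And>x. deriv U (x + 1) = deriv U x" and z: "deriv U z = 0" and t: "0 \<le> t"
  shows "peierls U y z \<le> peierls U x z + minact U t x y"
proof -
  have "peierls U y z \<le> minact U T z x + minact U t x y" if "0 \<le> T" for T
  proof -
    have "peierls U y z \<le> minact U (T + t) z y" by (rule peierls_le_minact[OF per z]) (use that t in simp)
    also have "\<dots> \<le> minact U T z x + minact U t x y" by (rule minact_triangle[OF per that t])
    finally show ?thesis .
  qed
  then have "peierls U y z \<le> (INF T\<in>{0..}. minact U T z x + minact U t x y)"
    by (auto intro: INF_greatest)
  also have "\<dots> = peierls U x z + minact U t x y"
    unfolding peierls_eq_INF_minact[OF per z]
    by (rule INF_ereal_add_left)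
      (auto simp: minact_nonneg ereal_infty_less_eq2(2) intro: order.trans[OF _ minact_nonneg])
  finally show ?thesis .
qed

text \<open>A curve of duration \<open>T\<close> passes at time \<open>s\<close> through some point of the circle, so it costs at
  least the minimal action via that point.\<close>

lemma INF_minact_split_le:
  assumes per: "\<And>x. deriv U (x + 1) = deriv U x" and s: "0 \<le> s" "s \<le> T"
  shows "(INF x\<in>{0..<1}. minact U s z x + minact U (T - s) x y) \<le> minact U T z y"
  unfolding minact_def[of U T z y]
proof (rule INF_greatest)
  fix \<gamma> assume \<gamma>: "\<gamma> \<in> {\<gamma>. abs_cont_on \<gamma> 0 T \<and> \<gamma> 0 = z \<and> cong1 (\<gamma> T) y}"
  have "minact U s z (frac (\<gamma> s)) \<le> action U \<gamma> 0 s"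
    by (rule minact_le_action) (use \<gamma> s in \<open>auto intro: abs_cont_on_subinterval cong1_frac\<close>)
  moreover have "minact U (T - s) (frac (\<gamma> s)) y \<le> action U \<gamma> s T"
    by (rule minact_le_action_translate[OF per]) (use \<gamma> s in \<open>auto intro: abs_cont_on_subinterval simp: frac_def\<close>)
  ultimately have "minact U s z (frac (\<gamma> s)) + minact U (T - s) (frac (\<gamma> s)) y \<le> action U \<gamma> 0 T"
    using action_split[of 0 s T U \<gamma>] s by (simp add: add_mono)
  then show "(INF x\<in>{0..<1}. minact U s z x + minact U (T - s) x y) \<le> action U \<gamma> 0 T"
    by (rule INF_lower2[OF frac_in_unit_interval])
qed

lemma LO_peierls:
  assumes per: "\<And>x. deriv U (x + 1) = deriv U x" and z: "deriv U z = 0" "z \<in> {0..<1}"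
    and c: "c \<noteq> -\<infinity>" and t: "0 \<le> t"
  shows "LO U t (\<lambda>x. c + peierls U x z) y = c + peierls U y z"
proof (rule antisym)
  have "LO U t (\<lambda>x. c + peierls U x z) y \<le> c + minact U T z y" if T: "0 \<le> T" for T
  proof (cases "t \<le> T")
    case True
    have "LO U t (\<lambda>x. c + peierls U x z) y \<le> (INF x\<in>{0..<1}. c + (minact U (T - t) z x + minact U t x y))"
      unfolding LO_def add.assoc
    proof (rule INF_mono)
      fix x :: real assume x: "x \<in> {0..<1}"
      have "peierls U x z \<le> minact U (T - t) z x" by (rule peierls_le_minact[OF per z(1)]) (use True in simp)
      then show "\<exists>x'\<in>{0..<1}. c + (peierls U x' z + minact U t x' y)
          \<le> c + (minact U (T - t) z x + minact U t x y)"
        using x by (intro bexI[of _ x] add_left_mono add_right_mono)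
    qed
    also have "\<dots> = c + (INF x\<in>{0..<1}. minact U (T - t) z x + minact U t x y)"
      using c by (intro INF_ereal_add_right) (auto simp: minact_nonneg)
    also have "\<dots> \<le> c + minact U T z y"
      using INF_minact_split_le[OF per, of "T - t" T z y] True t by (intro add_left_mono) simp
    finally show ?thesis .
  next
    case False
    have "LO U t (\<lambda>x. c + peierls U x z) y \<le> c + peierls U z z + minact U t z y"
      unfolding LO_def by (rule INF_lower[OF z(2)])
    also have "\<dots> \<le> c + minact U T z y"
      using minact_antimono_critical[OF per z(1) T, of t y] False
      by (simp add: peierls_self_critical[OF per z(1)] add_left_mono)
    finally show ?thesis .
  qed
  then show "LO U t (\<lambda>x. c + peierls U x z) y \<le> c + peierls U y z"
    unfolding peierls_eq_INF_minact[OF per z(1)] using c by (intro ereal_le_add_INF) (auto simp: minact_nonneg)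
  show "c + peierls U y z \<le> LO U t (\<lambda>x. c + peierls U x z) y"
    unfolding LO_def add.assoc using peierls_le_add_minact[OF per z(1) t]
    by (intro INF_greatest add_left_mono) simp
qed

lemma LO_Min:
  fixes f :: "'j \<Rightarrow> real \<Rightarrow> ereal"
  assumes "finite J" "J \<noteq> {}"
  shows "LO U t (\<lambda>x. MIN j\<in>J. f j x) y = (MIN j\<in>J. LO U t (f j) y)"
proof -
  have "(MIN j\<in>J. f j x) + m = (MIN j\<in>J. f j x + m)" for x and m :: ereal
  proof -
    have "mono (\<lambda>u::ereal. u + m)" by (rule monoI) (rule add_right_mono)
    then show ?thesis by (subst mono_Min_commute) (use assms in \<open>auto simp: image_image\<close>)
  qed
  then have "LO U t (\<lambda>x. MIN j\<in>J. f j x) y = (INF x\<in>{0..<1}. INF j\<in>J. f j x + minact U t x y)"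
    unfolding LO_def using assms by (simp add: Min_Inf)
  also have "\<dots> = (INF j\<in>J. INF x\<in>{0..<1}. f j x + minact U t x y)" by (rule INF_commute)
  also have "\<dots> = (MIN j\<in>J. LO U t (f j) y)" unfolding LO_def using assms by (simp add: Min_Inf)
  finally show ?thesis .
qed

lemma xmin_in_crit_set:
  assumes "crit_config U k q" "j \<in> {1..k}"
  shows "xmin q j \<in> crit_set U"
proof -
  have "2 * j \<in> {1..2*k}" using assms(2) by auto
  then show ?thesis using assms(1) unfolding crit_config_def crit_set_def xmin_def by blast
qed

lemma Wcoef_nonneg: "0 \<le> Wcoef U k q i" if "k \<ge> 1"
proof -
  have "0 \<le> maneR U y x" for y x
    unfolding maneR_def by (rule INF_greatest) (rule action_nonneg)
  then have "0 \<le> hRt U k q i j + hLt U q i j" for j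
    unfolding hRt_def hLt_def Let_def by simp
  then show ?thesis unfolding Wcoef_def using that by (simp add: Min_ge_iff)
qed

lemma LO_Wfun:
  assumes per: "\<And>x. deriv U (x + 1) = deriv U x" and cc: "crit_config U k q" and t: "0 \<le> t"
  shows "LO U t (Wfun U k q) y = Wfun U k q y"
proof -
  have k: "finite {1..k}" "{1..k} \<noteq> {}" using cc unfolding crit_config_def by auto
  have "LO U t (Wfun U k q) y = (MIN j\<in>{1..k}. LO U t (\<lambda>x. Wcoef U k q j + peierls U x (xmin q j)) y)"
    unfolding Wfun_def by (rule LO_Min[OF k])
  also have "\<dots> = (MIN j\<in>{1..k}. Wcoef U k q j + peierls U y (xmin q j))"
  proof (rule arg_cong[where f=Min], rule image_cong[OF refl])
    fix j assume "j \<in> {1..k}"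
    then have "deriv U (xmin q j) = 0" "xmin q j \<in> {0..<1}"
      using xmin_in_crit_set[OF cc] unfolding crit_set_def by auto
    moreover have "Wcoef U k q j \<noteq> -\<infinity>" using Wcoef_nonneg[of k U q j] k by auto
    ultimately show "LO U t (\<lambda>x. Wcoef U k q j + peierls U x (xmin q j)) y
        = Wcoef U k q j + peierls U y (xmin q j)"
      by (rule LO_peierls[OF per _ _ _ t])
  qed
  finally show ?thesis unfolding Wfun_def .
qed

section \<open>Domination by weak KAM solutions\<close>

lemma weak_KAM_le_action:
  assumes wk: "weak_KAM_neg U w" and "abs_cont_on \<gamma> 0 T" "0 \<le> T" "\<gamma> 0 = x" "cong1 (\<gamma> T) y"
  shows "ereal (w y) \<le> ereal (w x) + action U \<gamma> 0 T"
proof -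
  have "ereal (w (\<gamma> T) - w (\<gamma> 0)) \<le> action U \<gamma> 0 T"
    using wk assms(2,3) unfolding weak_KAM_neg_def by blast
  moreover have "w (x + 1) = w x" for x using wk unfolding weak_KAM_neg_def by blast
  then have "w (\<gamma> T) = w y" by (rule periodic_cong1[where f=w, OF _ assms(5)])
  ultimately show ?thesis using assms(4) by (cases "action U \<gamma> 0 T") auto
qed

lemma weak_KAM_le_minact:
  assumes "weak_KAM_neg U w" "0 \<le> T"
  shows "ereal (w y) \<le> ereal (w x) + minact U T x y"
  unfolding minact_def using assms
  by (intro ereal_le_add_INF) (auto intro: weak_KAM_le_action action_nonneg)

lemma weak_KAM_le_mane:
  assumes "weak_KAM_neg U w"
  shows "ereal (w y) \<le> ereal (w x) + mane U y x"
  unfolding mane_def using assms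
  by (intro ereal_le_add_INF) (auto intro: weak_KAM_le_action action_nonneg)

lemma weak_KAM_le_peierls:
  assumes "weak_KAM_neg U w"
  shows "ereal (w y) \<le> ereal (w x) + peierls U y x"
proof -
  have "\<forall>\<^sub>F T in at_top. ereal (w y - w x) \<le> minact U T x y"
    unfolding eventually_at_top_linorder
  proof (intro exI[of _ 0] allI impI)
    fix T :: real assume "0 \<le> T"
    with assms have "ereal (w y) \<le> ereal (w x) + minact U T x y" by (rule weak_KAM_le_minact)
    then show "ereal (w y - w x) \<le> minact U T x y" by (cases "minact U T x y") auto
  qed
  then have "ereal (w y - w x) \<le> peierls U y x"
    unfolding peierls_def by (rule Liminf_bounded)
  then show ?thesis by (cases "peierls U y x") auto
qed

section \<open>Piecewise \<open>C\<^sup>1\<close> curves of finite action\<close>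

lemma continuous_on_compose_isCont:
  fixes g :: "real \<Rightarrow> real"
  assumes "\<And>x. isCont g x" "continuous_on S f"
  shows "continuous_on S (\<lambda>s. g (f s))"
  by (rule continuous_on_compose2[of UNIV g]) (use assms in \<open>auto intro: continuous_at_imp_continuous_on\<close>)

lemma piecewise_C1_has_integral_vector_derivative:
  fixes \<gamma> :: "real \<Rightarrow> real"
  assumes "\<gamma> piecewise_C1_differentiable_on {a..b}" "a \<le> x" "x \<le> y" "y \<le> b"
  shows "((\<lambda>s. vector_derivative \<gamma> (at s)) has_integral (\<gamma> y - \<gamma> x)) {x..y}"
proof -
  obtain S where S: "finite S" "continuous_on {a..b} \<gamma>" "\<gamma> C1_differentiable_on {a..b} - S"
    using assms(1) unfolding piecewise_C1_differentiable_on_def by blast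
  have "(\<gamma> has_vector_derivative vector_derivative \<gamma> (at s)) (at s)" if "s \<in> {x<..<y} - S" for s
  proof -
    have "\<gamma> differentiable at s" using S(3) that assms(2-4) unfolding C1_differentiable_on_eq by auto
    then show ?thesis by (simp add: vector_derivative_works)
  qed
  moreover have "continuous_on {x..y} \<gamma>" using S(2) assms(2-4) by (auto intro: continuous_on_subset)
  ultimately show ?thesis by (rule fundamental_theorem_of_calculus_interior_strong[OF S(1) assms(3)])
qed

text \<open>The action integrand of a piecewise \<open>C\<^sup>1\<close> curve is continuous off a finite set, hence
  measurable after redefinition there, so finite action makes it Henstock--Kurzweil integrable.\<close>

lemma action_has_integral:
  assumes pc: "\<gamma> piecewise_C1_differentiable_on {a..b}" and dU: "\<And>x. isCont (deriv U) x"
    and I: "action U \<gamma> a b = ereal I"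
  shows "((\<lambda>s. Lag U (vector_derivative \<gamma> (at s)) (\<gamma> s)) has_integral I) {a..b}"
proof -
  obtain S where S: "finite S" "continuous_on {a..b} \<gamma>" "\<gamma> C1_differentiable_on {a..b} - S"
    using pc unfolding piecewise_C1_differentiable_on_def by blast
  define L where "L s = indicator ({a..b} - S) s * Lag U (vector_derivative \<gamma> (at s)) (\<gamma> s)" for s
  have L0: "0 \<le> L s" for s unfolding L_def by (simp add: Lag_nonneg)
  have "continuous_on ({a..b} - S) (\<lambda>s. deriv U (\<gamma> s))"
    by (rule continuous_on_compose_isCont[OF dU continuous_on_subset[OF S(2)]]) auto
  moreover have "continuous_on ({a..b} - S) (\<lambda>s. vector_derivative \<gamma> (at s))"
    using S(3) unfolding C1_differentiable_on_eq by blast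
  ultimately have "continuous_on ({a..b} - S) (\<lambda>s. Lag U (vector_derivative \<gamma> (at s)) (\<gamma> s))"
    unfolding Lag_def by (intro continuous_on_divide continuous_on_power continuous_on_add continuous_on_const) auto
  moreover have "{a..b} - S \<in> sets borel"
    by (intro sets.Diff borel_closed finite_imp_closed[OF S(1)]) auto
  ultimately have "(\<lambda>s. indicator ({a..b} - S) s *\<^sub>R Lag U (vector_derivative \<gamma> (at s)) (\<gamma> s))
      \<in> borel_measurable borel"
    by (intro borel_measurable_continuous_on_indicator)
  then have meas: "L \<in> borel_measurable borel" unfolding L_def by simp
  have "AE s in lborel. s \<notin> S" by (rule AE_not_in) (rule finite_imp_null_set_lborel[OF S(1)])
  then have "(\<integral>\<^sup>+s. ennreal (L s) \<partial>lborel) = action_ennreal U \<gamma> a b"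
    unfolding action_ennreal_def
  proof (rule nn_integral_cong_AE[OF eventually_mono])
    fix s assume "s \<notin> S"
    then show "ennreal (L s) = ennreal (Lag U (vector_derivative \<gamma> (at s)) (\<gamma> s)) * indicator {a..b} s"
      unfolding L_def by (simp split: split_indicator)
  qed
  also have "\<dots> = e2ennreal (action U \<gamma> a b)"
    by (simp add: action_eq_action_ennreal)
  also have "\<dots> = ennreal I" using I by simp
  finally have "(L has_integral I) UNIV"
    using action_nonneg[of U \<gamma> a b] I by (intro nn_integral_has_integral[OF meas L0]) auto
  moreover have "(\<lambda>s. if s \<in> {a..b} then L s else 0) = L" unfolding L_def by (auto simp: fun_eq_iff)
  ultimately have LI: "(L has_integral I) {a..b}"
    using has_integral_restrict_UNIV[of "{a..b}" L I] by (simp only:)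
  show ?thesis
    by (rule has_integral_spike_finite[OF S(1) _ LI]) (simp add: L_def)
qed

lemma abs_le_add_square_div:
  fixes v l :: real
  assumes "l > 0"
  shows "\<bar>v\<bar> \<le> l + v^2 / (4 * l)"
proof -
  have "0 \<le> (\<bar>v\<bar> - 2 * l)^2" by simp
  then have "4 * l * \<bar>v\<bar> \<le> 4 * l^2 + v^2" by (simp add: power2_eq_square algebra_simps)
  then show ?thesis using assms by (simp add: field_simps power2_eq_square)
qed

lemma sign_mult_le_quarter_square:
  fixes v l \<sigma> :: real
  assumes "\<sigma>^2 = 1"
  shows "l * \<sigma> * v - l^2 \<le> v^2 / 4"
proof -
  have "0 \<le> (v / 2 - l * \<sigma>)^2" by simp
  also have "(v / 2 - l * \<sigma>)^2 = v^2 / 4 - l * \<sigma> * v + l^2 * \<sigma>^2"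
    by (simp add: power2_eq_square algebra_simps)
  finally show ?thesis using assms by simp
qed

lemma abs_le_Lag:
  assumes "l > 0" "\<bar>deriv U x\<bar> \<le> C"
  shows "\<bar>v\<bar> \<le> C + l + Lag U v x / l"
proof -
  have "\<bar>v\<bar> \<le> \<bar>v + deriv U x\<bar> + \<bar>deriv U x\<bar>" by linarith
  also have "\<dots> \<le> (l + (v + deriv U x)^2 / (4 * l)) + C"
    using abs_le_add_square_div[OF assms(1)] assms(2) by (rule add_mono)
  also have "\<dots> = C + l + Lag U v x / l" unfolding Lag_def using assms(1) by (simp add: field_simps)
  finally show ?thesis .
qed

text \<open>Since \<open>|\<gamma>'| \<le> C + l + L(\<gamma>', \<gamma>)/l\<close> for every \<open>l > 0\<close>, the increments of \<open>\<gamma>\<close> are dominated as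
  required by \<open>abs_cont_on_dominated\<close>, with \<open>F\<close> the indefinite integral of the Lagrangian.\<close>

lemma abs_cont_on_finite_action:
  fixes \<gamma> :: "real \<Rightarrow> real"
  assumes pc: "\<gamma> piecewise_C1_differentiable_on {a..b}" and dU: "\<And>x. isCont (deriv U) x"
    and C: "\<And>x. \<bar>deriv U x\<bar> \<le> C" and I: "action U \<gamma> a b = ereal I" and ab: "a \<le> b"
  shows "abs_cont_on \<gamma> a b"
proof -
  define D where "D s = vector_derivative \<gamma> (at s)" for s
  define L where "L s = Lag U (D s) (\<gamma> s)" for s
  have LI: "(L has_integral I) {a..b}" unfolding L_def D_def by (rule action_has_integral[OF pc dU I])
  define F where "F x = integral {a..x} L" for x
  have Fdiff: "(L has_integral (F y - F x)) {x..y}" if xy: "a \<le> x" "x \<le> y" "y \<le> b" for x y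
  proof -
    have i1: "L integrable_on {a..y}"
      by (rule integrable_on_subinterval[OF has_integral_integrable[OF LI]]) (use xy in simp)
    have "integral {a..x} L + integral {x..y} L = integral {a..y} L"
      by (rule Henstock_Kurzweil_Integration.integral_combine[OF xy(1,2) i1])
    then have "integral {x..y} L = F y - F x" unfolding F_def by linarith
    moreover have "L integrable_on {x..y}"
      by (rule integrable_on_subinterval[OF i1]) (use xy in simp)
    ultimately show ?thesis by (metis integrable_integral)
  qed
  show ?thesis
  proof (rule abs_cont_on_dominated[OF _ ab])
    show "F x \<le> F y" if "a \<le> x" "x \<le> y" "y \<le> b" for x y
      using has_integral_nonneg[OF Fdiff[OF that]] by (simp add: L_def Lag_nonneg)
    fix l :: real assume l: "l > 0"
    have C0: "0 \<le> C" using C[of 0] by simp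
    show "\<exists>K\<ge>0. \<forall>x y. a \<le> x \<longrightarrow> x \<le> y \<longrightarrow> y \<le> b \<longrightarrow> \<bar>\<gamma> y - \<gamma> x\<bar> \<le> K * (y - x) + (F y - F x) / l"
    proof (intro exI[of _ "C + l"] conjI allI impI)
      fix x y assume xy: "a \<le> x" "x \<le> y" "y \<le> b"
      have DI: "(D has_integral (\<gamma> y - \<gamma> x)) {x..y}"
        unfolding D_def by (rule piecewise_C1_has_integral_vector_derivative[OF pc xy])
      define g where "g s = (C + l) + L s / l" for s
      have gI: "(g has_integral ((C + l) * (y - x) + (F y - F x) / l)) {x..y}"
        unfolding g_def using has_integral_add[OF has_integral_const_real[of "C + l" x y]
          has_integral_divide[OF Fdiff[OF xy], of l]] xy by (simp add: content_real mult.commute)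
      have bnd: "\<bar>D s\<bar> \<le> g s" for s unfolding g_def L_def by (rule abs_le_Lag[OF l C])
      have up: "D s \<le> g s" and lo: "- g s \<le> D s" for s using bnd[of s] by linarith+
      have "\<gamma> y - \<gamma> x \<le> (C + l) * (y - x) + (F y - F x) / l"
        by (rule has_integral_le[OF DI gI up])
      moreover have "- ((C + l) * (y - x) + (F y - F x) / l) \<le> \<gamma> y - \<gamma> x"
        by (rule has_integral_le[OF has_integral_neg[OF gI] DI lo])
      ultimately show "\<bar>\<gamma> y - \<gamma> x\<bar> \<le> (C + l) * (y - x) + (F y - F x) / l" by linarith
    qed (use C0 l in simp)
  qed
qed

lemma action_ge_linear:
  fixes \<gamma> :: "real \<Rightarrow> real"
  assumes pc: "\<gamma> piecewise_C1_differentiable_on {a..b}" and dU: "\<And>x. isCont (deriv U) x"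
    and I: "action U \<gamma> a b = ereal I" and ab: "a \<le> b" and \<sigma>: "\<sigma>^2 = 1"
  shows "l * \<sigma> * (\<gamma> b - \<gamma> a) + l * integral {a..b} (\<lambda>s. \<sigma> * deriv U (\<gamma> s)) - l^2 * (b - a) \<le> I"
proof -
  define D where "D s = vector_derivative \<gamma> (at s)" for s
  define J where "J = integral {a..b} (\<lambda>s. \<sigma> * deriv U (\<gamma> s))"
  have LI: "((\<lambda>s. Lag U (D s) (\<gamma> s)) has_integral I) {a..b}"
    unfolding D_def by (rule action_has_integral[OF pc dU I])
  have DI: "(D has_integral (\<gamma> b - \<gamma> a)) {a..b}"
    unfolding D_def by (rule piecewise_C1_has_integral_vector_derivative[OF pc order_refl ab order_refl])
  have "continuous_on {a..b} \<gamma>" using pc unfolding piecewise_C1_differentiable_on_def by blast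
  then have "continuous_on {a..b} (\<lambda>s. \<sigma> * deriv U (\<gamma> s))"
    by (intro continuous_on_mult continuous_on_const continuous_on_compose_isCont[OF dU])
  then have JI: "((\<lambda>s. \<sigma> * deriv U (\<gamma> s)) has_integral J) {a..b}"
    unfolding J_def by (intro integrable_integral integrable_continuous_interval)
  have "((\<lambda>s. l * \<sigma> * D s + l * (\<sigma> * deriv U (\<gamma> s)) - l^2) has_integral
      (l * \<sigma> * (\<gamma> b - \<gamma> a) + l * J - l^2 * (b - a))) {a..b}"
    using has_integral_diff[OF has_integral_add[OF has_integral_mult_right[OF DI, of "l * \<sigma>"]
        has_integral_mult_right[OF JI, of l]] has_integral_const_real[of "l^2" a b]] ab
    by (simp add: content_real mult.commute)
  then show ?thesis unfolding J_def[symmetric]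
  proof (rule has_integral_le[OF _ LI])
    fix s
    show "l * \<sigma> * D s + l * (\<sigma> * deriv U (\<gamma> s)) - l^2 \<le> Lag U (D s) (\<gamma> s)"
      using sign_mult_le_quarter_square[OF \<sigma>, of l "D s + deriv U (\<gamma> s)"]
      unfolding Lag_def by (simp add: algebra_simps)
  qed
qed

lemma action_ge_sign_bounded_below:
  fixes \<gamma> :: "real \<Rightarrow> real"
  assumes pc: "\<gamma> piecewise_C1_differentiable_on {a..b}" and dU: "\<And>x. isCont (deriv U) x"
    and I: "action U \<gamma> a b = ereal I" and ab: "a \<le> b" and \<sigma>: "\<sigma>^2 = 1"
    and disp: "\<bar>\<gamma> b - \<gamma> a\<bar> \<le> 1" and m: "m > 0"
    and sign: "\<And>s. s \<in> {a..b} \<Longrightarrow> m \<le> \<sigma> * deriv U (\<gamma> s)"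
  shows "m^2 * (b - a) / 4 - m / 2 \<le> I"
proof -
  define l where "l = m / 2"
  define J where "J = integral {a..b} (\<lambda>s. \<sigma> * deriv U (\<gamma> s))"
  have lb: "l * \<sigma> * (\<gamma> b - \<gamma> a) + l * J - l^2 * (b - a) \<le> I"
    unfolding J_def by (rule action_ge_linear[OF pc dU I ab \<sigma>])
  have "continuous_on {a..b} \<gamma>" using pc unfolding piecewise_C1_differentiable_on_def by blast
  then have "continuous_on {a..b} (\<lambda>s. \<sigma> * deriv U (\<gamma> s))"
    by (intro continuous_on_mult continuous_on_const continuous_on_compose_isCont[OF dU])
  then have JI: "((\<lambda>s. \<sigma> * deriv U (\<gamma> s)) has_integral J) {a..b}"
    unfolding J_def by (intro integrable_integral integrable_continuous_interval)
  have mI: "((\<lambda>s. m) has_integral m * (b - a)) {a..b}"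
    using has_integral_const_real[of m a b] ab by (simp add: mult.commute)
  have J: "m * (b - a) \<le> J"
    by (rule has_integral_le[OF mI JI]) (use sign in simp)
  have "\<bar>\<sigma>\<bar> = 1" using \<sigma> by (auto simp: power2_eq_1_iff)
  then have "\<bar>l * \<sigma> * (\<gamma> b - \<gamma> a)\<bar> = l * \<bar>\<gamma> b - \<gamma> a\<bar>"
    using m unfolding l_def by (simp add: abs_mult)
  also have "\<dots> \<le> l" using disp m unfolding l_def by simp
  finally have "- l \<le> l * \<sigma> * (\<gamma> b - \<gamma> a)" by linarith
  moreover have "l * (m * (b - a)) \<le> l * J" using J m unfolding l_def by simp
  moreover have "l * (m * (b - a)) - l^2 * (b - a) = m^2 * (b - a) / 4"
    unfolding l_def by (simp add: power2_eq_square field_simps)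
  ultimately show ?thesis using lb unfolding l_def by linarith
qed

section \<open>Calibrated curves approach the critical set\<close>

lemma floor_eq_if_continuous_avoids_Ints:
  fixes f :: "real \<Rightarrow> real"
  assumes f: "continuous_on {s..t} f" and st: "s \<le> t" and avoid: "\<And>x. x \<in> {s..t} \<Longrightarrow> f x \<notin> \<int>"
  shows "\<lfloor>f s\<rfloor> = \<lfloor>f t\<rfloor>"
proof (rule ccontr)
  assume "\<lfloor>f s\<rfloor> \<noteq> \<lfloor>f t\<rfloor>"
  then consider "\<lfloor>f s\<rfloor> < \<lfloor>f t\<rfloor>" | "\<lfloor>f t\<rfloor> < \<lfloor>f s\<rfloor>" by linarith
  then obtain x where "x \<in> {s..t}" "f x \<in> \<int>"
  proof cases
    case 1
    then have "f s \<le> of_int \<lfloor>f t\<rfloor>" "of_int \<lfloor>f t\<rfloor> \<le> f t" by linarith+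
    then show ?thesis using IVT'[OF _ _ st f] that by fastforce
  next
    case 2
    then have "f t \<le> of_int \<lfloor>f s\<rfloor>" "of_int \<lfloor>f s\<rfloor> \<le> f s" by linarith+
    then show ?thesis using IVT2'[OF _ _ st f] that by fastforce
  qed
  then show False using avoid by blast
qed

lemma continuous_nonvanishing_sign_eq:
  fixes g :: "real \<Rightarrow> real"
  assumes g: "continuous_on {s..t} g" and st: "s \<le> t" and nz: "\<And>x. x \<in> {s..t} \<Longrightarrow> g x \<noteq> 0"
  shows "0 < g s \<longleftrightarrow> 0 < g t"
proof
  assume "0 < g s"
  show "0 < g t"
  proof (rule ccontr)
    assume "\<not> 0 < g t"
    then obtain x where "s \<le> x" "x \<le> t" "g x = 0" using IVT2'[OF _ _ st g, of 0] \<open>0 < g s\<close> by auto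
    then show False using nz by auto
  qed
next
  assume "0 < g t"
  show "0 < g s"
  proof (rule ccontr)
    assume "\<not> 0 < g s"
    then obtain x where "s \<le> x" "x \<le> t" "g x = 0" using IVT'[OF _ _ st g, of 0] \<open>0 < g t\<close> by auto
    then show False using nz by auto
  qed
qed

lemma continuous_nonvanishing_bounded_below:
  fixes g :: "'a::topological_space \<Rightarrow> real"
  assumes "compact K" "continuous_on K g" "\<And>x. x \<in> K \<Longrightarrow> g x \<noteq> 0"
  shows "\<exists>m>0. \<forall>x\<in>K. m \<le> \<bar>g x\<bar>"
proof (cases "K = {}")
  case False
  then obtain x0 where "x0 \<in> K" "\<forall>x\<in>K. \<bar>g x0\<bar> \<le> \<bar>g x\<bar>"
    using continuous_attains_inf[OF assms(1) False continuous_on_rabs[OF assms(2)]] by blast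
  then show ?thesis using assms(3) by (intro exI[of _ "\<bar>g x0\<bar>"]) auto
qed (auto intro: exI[of _ 1])

text \<open>A curve that stays \<open>\<delta>\<close>-away from the critical set cannot cross the critical points
  \<open>p\<^sub>0 + \<int>\<close>, so it remains in one cell, on which \<open>U'\<close> has a fixed sign and \<open>|U'| \<ge> m > 0\<close>.\<close>

lemma far_from_critical_trapped:
  fixes \<gamma> :: "real \<Rightarrow> real"
  assumes dU: "\<And>x. isCont (deriv U) x" and per: "\<And>x. deriv U (x + 1) = deriv U x"
    and p0: "deriv U p0 = 0" and gc: "\<And>s. s \<le> t \<Longrightarrow> continuous_on {s..t} \<gamma>"
    and far: "\<And>s p. s \<le> t \<Longrightarrow> deriv U p = 0 \<Longrightarrow> \<delta> \<le> \<bar>\<gamma> s - p\<bar>" and \<delta>: "\<delta> > 0"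
  obtains m \<sigma> where "m > 0" "\<sigma>^2 = 1" "\<And>s. s \<le> t \<Longrightarrow> \<bar>\<gamma> t - \<gamma> s\<bar> \<le> 1"
    "\<And>s. s \<le> t \<Longrightarrow> m \<le> \<sigma> * deriv U (\<gamma> s)"
proof -
  have noint: "\<gamma> s - p0 \<notin> \<int>" if "s \<le> t" for s
  proof
    assume "\<gamma> s - p0 \<in> \<int>"
    then have "deriv U (\<gamma> s) = 0"
      using periodic_add_Ints[where f="deriv U", OF per, of "\<gamma> s - p0" p0] p0 by simp
    then show False using far[OF that, of "\<gamma> s"] \<delta> by simp
  qed
  define N where "N = \<lfloor>\<gamma> t - p0\<rfloor>"
  have cell: "p0 + N < \<gamma> s \<and> \<gamma> s < p0 + N + 1" if s: "s \<le> t" for s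
  proof -
    have "\<lfloor>\<gamma> s - p0\<rfloor> = N" unfolding N_def
      using s noint by (intro floor_eq_if_continuous_avoids_Ints continuous_intros gc) auto
    moreover have "\<gamma> s - p0 \<noteq> of_int N" using noint[of s] s by auto
    ultimately show ?thesis by linarith
  qed
  define K where "K = {p0 + N .. p0 + N + 1} \<inter> (\<Inter>p\<in>{p. deriv U p = 0}. {x. \<delta> \<le> \<bar>x - p\<bar>})"
  have "compact K" unfolding K_def
    by (intro compact_Int_closed compact_Icc closed_INT ballI closed_Collect_le continuous_intros)
  moreover have "continuous_on K (deriv U)" by (intro continuous_at_imp_continuous_on ballI dU)
  moreover have "deriv U x \<noteq> 0" if "x \<in> K" for x
  proof
    assume "deriv U x = 0"
    then have "\<delta> \<le> \<bar>x - x\<bar>" using that unfolding K_def by blast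
    then show False using \<delta> by simp
  qed
  ultimately have "\<exists>m>0. \<forall>x\<in>K. m \<le> \<bar>deriv U x\<bar>" by (rule continuous_nonvanishing_bounded_below)
  then obtain m where m: "m > 0" "\<And>x. x \<in> K \<Longrightarrow> m \<le> \<bar>deriv U x\<bar>" by blast
  have inK: "\<gamma> s \<in> K" if s: "s \<le> t" for s
    using cell[OF s] far[OF s] unfolding K_def by auto
  define \<sigma> :: real where "\<sigma> = (if 0 < deriv U (\<gamma> t) then 1 else -1)"
  have "m \<le> \<sigma> * deriv U (\<gamma> s)" if s: "s \<le> t" for s
  proof -
    have "0 < deriv U (\<gamma> s) \<longleftrightarrow> 0 < deriv U (\<gamma> t)"
      using s m inK by (intro continuous_nonvanishing_sign_eq continuous_on_compose_isCont[OF dU] gc) force+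
    then have "\<sigma> * deriv U (\<gamma> s) = \<bar>deriv U (\<gamma> s)\<bar>"
      using m(2)[OF inK[OF s]] m(1) unfolding \<sigma>_def by auto
    then show ?thesis using m(2)[OF inK[OF s]] by simp
  qed
  moreover have "\<bar>\<gamma> t - \<gamma> s\<bar> \<le> 1" if "s \<le> t" for s using cell[OF that] cell[of t] by auto
  moreover have "\<sigma>^2 = 1" unfolding \<sigma>_def by simp
  ultimately show ?thesis using that m(1) by blast
qed

text \<open>By the previous lemma, a curve staying away from the critical set would have action at
  least \<open>m\<^sup>2 T/4 - m/2\<close> over time intervals of length \<open>T\<close>, whereas calibration bounds it by
  \<open>2 sup |w|\<close>.\<close>

lemma calibrated_curve_approaches_critical:
  fixes \<gamma> w :: "real \<Rightarrow> real"
  assumes dU: "\<And>x. isCont (deriv U) x" and per: "\<And>x. deriv U (x + 1) = deriv U x"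
    and p0: "deriv U p0 = 0"
    and pc: "\<And>a. a \<le> 0 \<Longrightarrow> \<gamma> piecewise_C1_differentiable_on {a..0}"
    and act: "\<And>a b. a < b \<Longrightarrow> b \<le> 0 \<Longrightarrow> action U \<gamma> a b = ereal (w (\<gamma> b) - w (\<gamma> a))"
    and M: "\<And>x. \<bar>w x\<bar> \<le> M" and \<delta>: "\<delta> > 0"
  shows "\<exists>a<0. \<exists>p. deriv U p = 0 \<and> \<bar>\<gamma> a - p\<bar> < \<delta>"
proof (rule ccontr)
  assume nc: "\<not> ?thesis"
  have far: "\<delta> \<le> \<bar>\<gamma> s - p\<bar>" if "s \<le> -1" "deriv U p = 0" for s p
  proof -
    have "s < 0" using that(1) by simp
    then show ?thesis using nc that(2) by (meson not_less)
  qed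
  have gc: "continuous_on {s..-1} \<gamma>" if "s \<le> -1" for s
    using pc[of s] that unfolding piecewise_C1_differentiable_on_def by (auto intro: continuous_on_subset)
  obtain m \<sigma> where m: "m > 0" and \<sigma>: "\<sigma>^2 = 1" and disp: "\<And>s. s \<le> -1 \<Longrightarrow> \<bar>\<gamma> (-1) - \<gamma> s\<bar> \<le> 1"
    and sign: "\<And>s. s \<le> -1 \<Longrightarrow> m \<le> \<sigma> * deriv U (\<gamma> s)"
    using far_from_critical_trapped[OF dU per p0 gc far \<delta>] by blast
  define T where "T = 4 * (2 * M + 1) / m^2 + 2 / m"
  define a where "a = -1 - T"
  have "T > 0" using M[of 0] m unfolding T_def by (simp add: add_nonneg_pos)
  then have a: "a < -1" unfolding a_def by simp
  have "\<gamma> piecewise_C1_differentiable_on {a..-1}"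
    by (rule piecewise_C1_differentiable_on_subset[OF pc[of a]]) (use a in auto)
  moreover have "action U \<gamma> a (-1) = ereal (w (\<gamma> (-1)) - w (\<gamma> a))" using act a by simp
  ultimately have "m^2 * (-1 - a) / 4 - m / 2 \<le> w (\<gamma> (-1)) - w (\<gamma> a)"
    using a sign disp[of a] by (intro action_ge_sign_bounded_below[OF _ dU _ _ \<sigma> _ m]) auto
  moreover have "m^2 * (-1 - a) / 4 - m / 2 = 2 * M + 1"
    using m unfolding a_def T_def by (simp add: power2_eq_square field_simps)
  ultimately show False using M[of "\<gamma> (-1)"] M[of "\<gamma> a"] by linarith
qed

lemma weak_KAM_calibrated_curve:
  assumes wk: "weak_KAM_neg U w" and dU: "\<And>x. isCont (deriv U) x" and C: "\<And>x. \<bar>deriv U x\<bar> \<le> C"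
  shows "\<exists>\<gamma>. \<gamma> 0 = y \<and> (\<forall>a\<le>0. \<gamma> piecewise_C1_differentiable_on {a..0}) \<and> (\<forall>a<0. abs_cont_on \<gamma> a 0) \<and>
    (\<forall>a b. a < b \<and> b \<le> 0 \<longrightarrow> action U \<gamma> a b = ereal (w (\<gamma> b) - w (\<gamma> a)))"
proof -
  obtain \<gamma> where \<gamma>0: "\<gamma> 0 = y" and pc: "\<forall>a\<le>0. \<gamma> piecewise_C1_differentiable_on {a..0}"
    and cal: "\<forall>a b. a < b \<and> b \<le> 0 \<longrightarrow> ereal (w (\<gamma> b) - w (\<gamma> a)) = action U \<gamma> a b"
    using wk unfolding weak_KAM_neg_def by metis
  have "abs_cont_on \<gamma> a 0" if "a < 0" for a
  proof (rule abs_cont_on_finite_action[OF _ dU C])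
    show "action U \<gamma> a 0 = ereal (w (\<gamma> 0) - w (\<gamma> a))" using cal that by simp
  qed (use pc that in auto)
  then show ?thesis using \<gamma>0 pc cal by (intro exI[of _ \<gamma>]) auto
qed

lemma action_short_segment:
  assumes d: "\<bar>d\<bar> \<le> \<rho>" and small: "\<And>s. s \<in> {0..1} \<Longrightarrow> \<bar>deriv U (p + s * d)\<bar> \<le> \<rho>"
  shows "action U (\<lambda>s. p + s * d) 0 1 \<le> ereal (\<rho>^2)"
proof -
  have "ennreal (Lag U (vector_derivative (\<lambda>s. p + s * d) (at s)) (p + s * d)) * indicator {0..1} s
      \<le> ennreal (\<rho>^2) * indicator {0..1} s" for s
  proof (cases "s \<in> {0..1}")
    case True
    have "\<bar>d + deriv U (p + s * d)\<bar> \<le> 2 * \<rho>" using d small[OF True] by linarith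
    then have "(d + deriv U (p + s * d))^2 \<le> (2 * \<rho>)^2"
      by (metis abs_ge_zero power2_abs power_mono)
    then show ?thesis using True unfolding Lag_def vector_derivative_linear
      by (simp add: power2_eq_square ennreal_leI)
  qed simp
  then have "action_ennreal U (\<lambda>s. p + s * d) 0 1 \<le> (\<integral>\<^sup>+s. ennreal (\<rho>^2) * indicator {0..1::real} s \<partial>lborel)"
    unfolding action_ennreal_def by (intro nn_integral_mono)
  also have "\<dots> = ennreal (\<rho>^2)" by (simp add: nn_integral_cmult_indicator)
  finally show ?thesis by (simp add: action_eq_action_ennreal less_eq_ennreal.rep_eq)
qed

lemma peierls_le_segment_add_minact:
  assumes per: "\<And>x. deriv U (x + 1) = deriv U x" and z: "deriv U z = 0"
    and d: "\<bar>d\<bar> \<le> \<rho>" and small: "\<And>s. s \<in> {0..1} \<Longrightarrow> \<bar>deriv U (z + s * d)\<bar> \<le> \<rho>"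
    and x: "cong1 (z + d) x" and T: "0 \<le> T"
  shows "peierls U y z \<le> ereal (\<rho>^2) + minact U T x y"
proof -
  have "minact U 1 z x \<le> action U (\<lambda>s. z + s * d) 0 1"
    using x by (intro minact_le_action abs_cont_on_linear) auto
  also have "\<dots> \<le> ereal (\<rho>^2)" by (rule action_short_segment[OF d small])
  finally have seg: "minact U 1 z x \<le> ereal (\<rho>^2)" .
  have "peierls U y z \<le> minact U (1 + T) z y" by (rule peierls_le_minact[OF per z]) (use T in simp)
  also have "\<dots> \<le> minact U 1 z x + minact U T x y" by (rule minact_triangle[OF per]) (use T in auto)
  also have "\<dots> \<le> ereal (\<rho>^2) + minact U T x y" using seg by (rule add_right_mono)
  finally show ?thesis .
qed

text \<open>Near the point \<open>\<gamma>(a)\<close> where the calibrated curve ending at \<open>y\<close> comes close to a critical point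
  \<open>p\<close>, go from \<open>p\<close> to \<open>\<gamma>(a)\<close> along a short segment (cheap, as \<open>U'\<close> is small near \<open>p\<close>) and then follow
  \<open>\<gamma>\<close>, whose action is \<open>w(y) - w(\<gamma>(a))\<close>.\<close>

lemma weak_KAM_peierls_approx:
  assumes dU: "\<And>x. isCont (deriv U) x" and per: "\<And>x. deriv U (x + 1) = deriv U x"
    and p0: "deriv U p0 = 0" and wk: "weak_KAM_neg U w" and e: "e > 0"
  shows "\<exists>z\<in>crit_set U. ereal (w z) + peierls U y z \<le> ereal (w y) + ereal e"
proof -
  have dUc: "continuous_on UNIV (deriv U)" by (intro continuous_at_imp_continuous_on ballI dU)
  obtain C where C: "\<And>x. \<bar>deriv U x\<bar> \<le> C" using periodic_continuous_bounded[OF per dUc] by blast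
  have wc: "continuous_on UNIV w" and wper: "\<And>x. w (x + 1) = w x"
    using wk unfolding weak_KAM_neg_def by blast+
  obtain M where M: "\<And>x. \<bar>w x\<bar> \<le> M" using periodic_continuous_bounded[OF wper wc] by blast
  obtain \<gamma> where \<gamma>0: "\<gamma> 0 = y" and pc: "\<And>a. a \<le> 0 \<Longrightarrow> \<gamma> piecewise_C1_differentiable_on {a..0}"
    and ac: "\<And>a. a < 0 \<Longrightarrow> abs_cont_on \<gamma> a 0"
    and cal: "\<And>a b. a < b \<Longrightarrow> b \<le> 0 \<Longrightarrow> action U \<gamma> a b = ereal (w (\<gamma> b) - w (\<gamma> a))"
    using weak_KAM_calibrated_curve[OF wk dU C, of y] by blast
  obtain \<delta>1 where \<delta>1: "\<delta>1 > 0" "\<And>x x'. \<bar>x - x'\<bar> < \<delta>1 \<Longrightarrow> \<bar>w x - w x'\<bar> < e / 2"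
    using periodic_uniformly_continuous[OF wper wc, of "e / 2"] e by auto
  define \<rho> where "\<rho> = min 1 (e / 2)"
  have "\<rho> > 0" "\<rho> \<le> 1" "\<rho> \<le> e / 2" using e unfolding \<rho>_def by auto
  moreover have "\<rho>^2 \<le> \<rho>" using \<open>\<rho> > 0\<close> \<open>\<rho> \<le> 1\<close> by (simp add: power2_eq_square mult_left_le_one_le)
  ultimately have \<rho>: "\<rho> > 0" "\<rho>^2 \<le> e / 2" by auto
  obtain \<delta>2 where \<delta>2: "\<delta>2 > 0" "\<And>x x'. \<bar>x - x'\<bar> < \<delta>2 \<Longrightarrow> \<bar>deriv U x - deriv U x'\<bar> < \<rho>"
    using periodic_uniformly_continuous[OF per dUc \<rho>(1)] by blast
  obtain a p where a: "a < 0" and p: "deriv U p = 0" and ap: "\<bar>\<gamma> a - p\<bar> < min (min \<delta>1 \<delta>2) \<rho>"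
    using calibrated_curve_approaches_critical[OF dU per p0 pc cal M, of "min (min \<delta>1 \<delta>2) \<rho>"] \<delta>1 \<delta>2 \<rho>
    by auto
  define z where "z = frac p"
  define d where "d = \<gamma> a - p"
  have zp: "cong1 z p" unfolding z_def by (rule cong1_sym[OF cong1_frac])
  have z: "deriv U z = 0" using periodic_cong1[where f="deriv U", OF per zp] p by simp
  have "z \<in> crit_set U" unfolding crit_set_def using z frac_in_unit_interval[of p] z_def by simp
  have "\<bar>deriv U (z + s * d)\<bar> \<le> \<rho>" if "s \<in> {0..1}" for s
  proof -
    have "\<bar>(z + s * d) - z\<bar> \<le> \<bar>d\<bar>" using that by (simp add: abs_mult mult_left_le_one_le)
    then have "\<bar>deriv U (z + s * d) - deriv U z\<bar> < \<rho>" using ap unfolding d_def by (intro \<delta>2(2)) linarith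
    then show ?thesis using z by simp
  qed
  then have "peierls U y z \<le> ereal (\<rho>^2) + minact U (0 - a) (\<gamma> a) y"
    using zp ap a unfolding d_def by (intro peierls_le_segment_add_minact[OF per z]) (auto simp: cong1_def)
  moreover have "minact U (0 - a) (\<gamma> a) y \<le> action U \<gamma> a 0"
    using \<gamma>0 a by (intro minact_le_action_translate[OF per ac]) (auto simp: cong1_refl)
  moreover have "action U \<gamma> a 0 = ereal (w y - w (\<gamma> a))" using cal[OF a] \<gamma>0 by simp
  ultimately have "peierls U y z \<le> ereal (\<rho>^2 + (w y - w (\<gamma> a)))"
    using add_left_mono[of "minact U (0 - a) (\<gamma> a) y" "ereal (w y - w (\<gamma> a))" "ereal (\<rho>^2)"] by simp
  then have P: "ereal (w z) + peierls U y z \<le> ereal (w z + \<rho>^2 + (w y - w (\<gamma> a)))"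
    by (cases "peierls U y z") auto
  have "w z = w p" by (rule periodic_cong1[where f=w, OF wper zp])
  moreover have "\<bar>w p - w (\<gamma> a)\<bar> < e / 2" using ap by (intro \<delta>1(2)) linarith
  ultimately have "w z + \<rho>^2 + (w y - w (\<gamma> a)) \<le> w y + e" using \<rho>(2) unfolding abs_less_iff by linarith
  then have "ereal (w z) + peierls U y z \<le> ereal (w y) + ereal e"
    using order.trans[OF P, of "ereal (w y) + ereal e"] by simp
  then show ?thesis using \<open>z \<in> crit_set U\<close> by auto
qed

section \<open>Weak KAM solutions are invariant\<close>

lemma weak_KAM_eq_INF_peierls:
  assumes dU: "\<And>x. isCont (deriv U) x" and per: "\<And>x. deriv U (x + 1) = deriv U x"
    and p0: "deriv U p0 = 0" and wk: "weak_KAM_neg U w"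
  shows "ereal (w y) = (INF z\<in>crit_set U. ereal (w z) + peierls U y z)"
proof (rule antisym)
  show "ereal (w y) \<le> (INF z\<in>crit_set U. ereal (w z) + peierls U y z)"
    by (rule INF_greatest) (rule weak_KAM_le_peierls[OF wk])
  show "(INF z\<in>crit_set U. ereal (w z) + peierls U y z) \<le> ereal (w y)"
  proof (rule ereal_le_epsilon2)
    fix e :: real assume "0 < e"
    then obtain z where "z \<in> crit_set U" "ereal (w z) + peierls U y z \<le> ereal (w y) + ereal e"
      using weak_KAM_peierls_approx[OF dU per p0 wk] by blast
    then show "(INF z\<in>crit_set U. ereal (w z) + peierls U y z) \<le> ereal (w y) + ereal e"
      by (blast intro: INF_lower2)
  qed
qed

lemma weak_KAM_eq_INF_mane:
  assumes wk: "weak_KAM_neg U w"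
  shows "ereal (w y) = (INF x\<in>{0..<1}. ereal (w x) + mane U y x)"
proof (rule antisym)
  show "ereal (w y) \<le> (INF x\<in>{0..<1}. ereal (w x) + mane U y x)"
    by (rule INF_greatest) (rule weak_KAM_le_mane[OF wk])
  have "mane U y (frac y) \<le> action U (snd (0::real, \<lambda>s::real. frac y)) 0 (fst (0::real, \<lambda>s::real. frac y))"
    unfolding mane_def by (rule INF_lower) (auto simp: abs_cont_on_const intro: cong1_sym cong1_frac)
  then have "mane U y (frac y) \<le> 0" by (simp add: action_refl)
  moreover have "w (frac y) = w y"
    using wk unfolding weak_KAM_neg_def by (metis periodic_cong1 cong1_sym cong1_frac)
  ultimately have "ereal (w (frac y)) + mane U y (frac y) \<le> ereal (w y)"
    using add_left_mono[of "mane U y (frac y)" 0 "ereal (w y)"] by simp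
  then show "(INF x\<in>{0..<1}. ereal (w x) + mane U y x) \<le> ereal (w y)"
    by (rule INF_lower2[OF frac_in_unit_interval])
qed

text \<open>\<open>S\<^sub>t\<close> is monotone and fixes each \<open>w(z) + h(\<cdot>;z)\<close>, which dominates \<open>w\<close>; taking the infimum over
  \<open>z\<close> gives \<open>S\<^sub>t w \<le> w\<close>.\<close>

lemma LO_weak_KAM:
  assumes dU: "\<And>x. isCont (deriv U) x" and per: "\<And>x. deriv U (x + 1) = deriv U x"
    and p0: "deriv U p0 = 0" and wk: "weak_KAM_neg U w" and t: "0 \<le> t"
  shows "LO U t (\<lambda>x. ereal (w x)) y = ereal (w y)"
proof (rule antisym)
  show "ereal (w y) \<le> LO U t (\<lambda>x. ereal (w x)) y"
    unfolding LO_def by (rule INF_greatest) (rule weak_KAM_le_minact[OF wk t])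
  show "LO U t (\<lambda>x. ereal (w x)) y \<le> ereal (w y)"
    unfolding weak_KAM_eq_INF_peierls[OF dU per p0 wk, of y]
  proof (rule INF_greatest)
    fix z assume "z \<in> crit_set U"
    then have z: "deriv U z = 0" "z \<in> {0..<1}" unfolding crit_set_def by auto
    have "LO U t (\<lambda>x. ereal (w x)) y \<le> LO U t (\<lambda>x. ereal (w z) + peierls U x z) y"
      unfolding LO_def
    proof (rule INF_mono)
      fix x :: real assume "x \<in> {0..<1}"
      then show "\<exists>x'\<in>{0..<1}. ereal (w x') + minact U t x' y \<le> ereal (w z) + peierls U x z + minact U t x y"
        using weak_KAM_le_peierls[OF wk, of x z] by (intro bexI[of _ x] add_right_mono)
    qed
    also have "\<dots> = ereal (w z) + peierls U y z" by (rule LO_peierls[OF per z _ t]) simp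
    finally show "LO U t (\<lambda>x. ereal (w x)) y \<le> ereal (w z) + peierls U y z" .
  qed
qed

lemma crit_config_deriv_0:
  assumes "crit_config U k q"
  shows "deriv U 0 = 0"
proof -
  have "q 1 \<in> {t \<in> {0..<1}. deriv U t = 0}" using assms unfolding crit_config_def by auto
  moreover have "q 1 = 0" using assms unfolding crit_config_def by simp
  ultimately show ?thesis by simp
qed

theorem corollary4p10:
  fixes U :: "real \<Rightarrow> real" and k :: nat and q :: "nat \<Rightarrow> real"
  assumes "smooth_fun U" and "skew_periodic U" and "crit_config U k q"
  shows "(\<forall>w. weak_KAM_neg U w \<longrightarrow>
            (\<forall>t\<ge>0. \<forall>y. LO U t (\<lambda>x. ereal (w x)) y = ereal (w y)) \<and>
            (\<forall>y. ereal (w y) = (INF x \<in> {0..<1}. ereal (w x) + mane U y x) \<and>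
                 ereal (w y) = (INF z \<in> crit_set U. ereal (w z) + peierls U y z)))
       \<and> (\<forall>t\<ge>0. \<forall>y. LO U t (Wfun U k q) y = Wfun U k q y)"
proof -
  have dU: "\<And>x. isCont (deriv U) x" by (rule smooth_fun_isCont_deriv[OF assms(1)])
  have per: "\<And>x. deriv U (x + 1) = deriv U x" by (rule skew_periodic_deriv_periodic[OF assms(2)])
  have p0: "deriv U 0 = 0" by (rule crit_config_deriv_0[OF assms(3)])
  show ?thesis
    using LO_weak_KAM[OF dU per p0] weak_KAM_eq_INF_mane weak_KAM_eq_INF_peierls[OF dU per p0]
      LO_Wfun[OF per assms(3)]
    by blast
qed

end
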